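(* Let $V$ be a real vector space, let $F$ be a geometric mean closed, semiprime $f$-algebra, let $T\colon V\times V\to F$ be a vector semi-inner product, and let $u\in F^+$. Define $\|x\|^T_u:=T(x,x)\boxtimes u$ for $x\in V$. Then for all $x,y\in V$, \[ (\|x+y\|^T_u)^2\le(\|x\|^T_u+\|y\|^T_u)^2-\inf_{\lambda\in\mathbb{R}\setminus\{0\}}\{|\lambda|^{-1}(\|\lambda x-y\|^T_u)^2\}\le(\|x\|^T_u+\|y\|^T_u)^2 \] (where the infimum exists in $F$). Moreover, the equality \[ (\|x+y\|^T_u)^2=(\|x\|^T_u+\|y\|^T_u)^2-\inf_{\lambda\in\mathbb{R}\setminus\{0\}}\{|\lambda|^{-1}(\|\lambda x-y\|^T_u)^2\} \] holds if and only if $T(x,y)u\in F^+$.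
   Context: All vector spaces are over $\mathbb{R}$ and all vector lattices are Archimedean; $F^+=\{x\in F:x\ge0\}$. An $f$-algebra is a vector lattice $F$ with an associative bilinear multiplication (written by juxtaposition, $a^2=aa$) such that $xy\in F^+$ for $x,y\in F^+$, and $\inf\{x,y\}=0$ implies $\inf\{xz,y\}=\inf\{x,yz\}=0$ for all $z\in F^+$. It is semiprime if it has no nonzero nilpotent elements. A vector lattice $F$ is geometric mean closed if $\inf\{\theta u+\theta^{-1}v:\theta\in(0,\infty)\}$ exists in $F$ for all $u,v\in F^+$, and then $u\boxtimes v:=2^{-1}\inf\{\theta u+\theta^{-1}v:\theta\in(0,\infty)\}$. A map $T\colon V\times V\to F$ is a vector semi-inner product if it is bilinear, symmetric ($T(x,y)=T(y,x)$), and satisfies $T(x,x)\ge 0$ for all $x\in V$. *)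

theory Defs
  imports "HOL-Analysis.Analysis"
begin

text \<open>Vector lattices are modelled by the sort {ordered_real_vector, lattice}
  (order compatible with the real vector space structure, plus binary inf/sup);
  the multiplication is the ring multiplication of real_algebra
  (associative and bilinear, no unit, no commutativity assumed).\<close>

definition archimedean_vl :: "'f::{ordered_real_vector, lattice} itself \<Rightarrow> bool" where
  "archimedean_vl _ \<longleftrightarrow>
     (\<forall>x y::'f. 0 \<le> x \<longrightarrow> (\<forall>n::nat. real n *\<^sub>R x \<le> y) \<longrightarrow> x = 0)"

definition f_algebra :: "'f::{real_algebra, ordered_real_vector, lattice} itself \<Rightarrow> bool" where
  "f_algebra TYPE('f) \<longleftrightarrow>
     archimedean_vl TYPE('f) \<and>
     (\<forall>x y::'f. 0 \<le> x \<longrightarrow> 0 \<le> y \<longrightarrow> 0 \<le> x * y) \<and>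
     (\<forall>x y z::'f. inf x y = 0 \<longrightarrow> 0 \<le> z \<longrightarrow> inf (x * z) y = 0 \<and> inf x (y * z) = 0)"

fun mpow :: "'f::times \<Rightarrow> nat \<Rightarrow> 'f" where
  "mpow x 0 = x"
| "mpow x (Suc n) = x * mpow x n"
(* mpow x n = x^(n+1) *)

definition semiprime :: "'f::{real_algebra, ordered_real_vector, lattice} itself \<Rightarrow> bool" where
  "semiprime TYPE('f) \<longleftrightarrow> (\<forall>(x::'f) n. mpow x n = 0 \<longrightarrow> x = 0)"

definition is_glb :: "'a::order set \<Rightarrow> 'a \<Rightarrow> bool" where
  "is_glb S a \<longleftrightarrow> (\<forall>s\<in>S. a \<le> s) \<and> (\<forall>b. (\<forall>s\<in>S. b \<le> s) \<longrightarrow> b \<le> a)"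

definition gm_set :: "'f::ordered_real_vector \<Rightarrow> 'f \<Rightarrow> 'f set" where
  "gm_set u v = {\<theta> *\<^sub>R u + inverse \<theta> *\<^sub>R v | \<theta>::real. 0 < \<theta>}"

definition geometric_mean_closed :: "'f::{ordered_real_vector, lattice} itself \<Rightarrow> bool" where
  "geometric_mean_closed TYPE('f) \<longleftrightarrow>
     (\<forall>u v::'f. 0 \<le> u \<longrightarrow> 0 \<le> v \<longrightarrow> (\<exists>a. is_glb (gm_set u v) a))"

definition gmean :: "'f::ordered_real_vector \<Rightarrow> 'f \<Rightarrow> 'f" (infixl "\<boxtimes>" 70) where
  "u \<boxtimes> v = (1/2) *\<^sub>R (THE a. is_glb (gm_set u v) a)"

definition vector_semi_inner :: "('v::real_vector \<Rightarrow> 'v \<Rightarrow> 'f::{real_algebra, ordered_real_vector}) \<Rightarrow> bool" where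
  "vector_semi_inner T \<longleftrightarrow> bilinear T \<and> (\<forall>x y. T x y = T y x) \<and> (\<forall>x. 0 \<le> T x x)"

definition Tnorm :: "('v \<Rightarrow> 'v \<Rightarrow> 'f::ordered_real_vector) \<Rightarrow> 'f \<Rightarrow> 'v \<Rightarrow> 'f" where
  "Tnorm T u x = T x x \<boxtimes> u"

end

theory Submission
  imports Defs "HOL-Library.Lattice_Algebras"
begin

text \<open>
  In an Archimedean \<open>f\<close>-algebra, right multiplication by a positive element is a positive
  orthomorphism, and any two positive orthomorphisms commute; together with semiprimeness this
  makes the multiplication commutative.  Then squares are positive, \<open>x \<mapsto> x\<^sup>2\<close> preserves infima of
  positive elements, and a grid argument over \<open>\<theta>\<close> gives \<open>2ab = inf\<^sub>\<theta> (\<theta>a\<^sup>2 + \<theta>\<^sup>-\<^sup>1b\<^sup>2)\<close> for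
  \<open>a, b \<ge> 0\<close>.  As multiplication by a positive element preserves infima, this yields
  \<open>(u \<boxtimes> v)\<^sup>2 = uv\<close>, so \<open>\<parallel>z\<parallel>\<^sup>2 = T(z,z)u\<close>.  With \<open>c = T(x,y)u\<close> the set in the statement is
  \<open>{\<theta>\<parallel>x\<parallel>\<^sup>2 + \<theta>\<^sup>-\<^sup>1\<parallel>y\<parallel>\<^sup>2 \<mp> 2c}\<close>, whose infimum is \<open>2\<parallel>x\<parallel>\<parallel>y\<parallel> - 2|c|\<close>; since
  \<open>\<parallel>x + y\<parallel>\<^sup>2 = \<parallel>x\<parallel>\<^sup>2 + \<parallel>y\<parallel>\<^sup>2 + 2c\<close>, everything reduces to \<open>c \<le> |c|\<close>, with equality iff \<open>c \<ge> 0\<close>.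
\<close>

section \<open>Vector lattices\<close>

definition labs :: "'a::{ordered_real_vector,lattice} \<Rightarrow> 'a" where
  "labs x = sup x (- x)"

text \<open>
  The sort \<open>{ordered_real_vector, lattice}\<close> is not an instance of \<open>lattice_ab_group_add_abs\<close>,
  so the library on lattice-ordered groups is obtained by interpretation, with \<open>labs\<close> as the
  absolute value.  The negative part of \<open>x\<close> is \<open>- vl.nprt x\<close>.
\<close>

interpretation vl: lattice_ab_group_add_abs labs "(+)" "0::'a::{ordered_real_vector,lattice}"
    "(-)" uminus "(\<le>)" "(<)" inf sup
  by unfold_locales (auto intro: add_left_mono simp: labs_def)

lemma inf_diff_distrib_right:
  fixes a b c :: "'a::{ordered_real_vector,lattice}"
  shows "inf b c - a = inf (b - a) (c - a)"
  using vl.add_inf_distrib_right[of b c "- a"] by simp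

lemma inf_pprt_nprt:
  fixes x :: "'a::{ordered_real_vector,lattice}"
  shows "inf (vl.pprt x) (- vl.nprt x) = 0"
proof -
  have "sup (vl.pprt x) (- vl.nprt x) = sup (labs x) 0"
    by (simp add: vl.pprt_def vl.nprt_def vl.neg_inf_eq_sup labs_def sup_aci)
  also have "\<dots> = labs x"
    by (simp add: sup_absorb1)
  finally show ?thesis
    using vl.add_eq_inf_sup[of "vl.pprt x" "- vl.nprt x"] vl.abs_prts[of x] by simp
qed

lemma inf_eq_diff_pprt:
  fixes x y :: "'a::{ordered_real_vector,lattice}"
  shows "inf x y = x - vl.pprt (x - y)"
  by (simp add: vl.pprt_def vl.diff_sup_eq_inf vl.add_inf_distrib_left inf_commute)

lemma sup_eq_add_pprt:
  fixes x y :: "'a::{ordered_real_vector,lattice}"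
  shows "sup x y = y + vl.pprt (x - y)"
  by (simp add: vl.pprt_def vl.add_sup_distrib_left)

lemma pprt_diff_disjoint:
  fixes u v :: "'a::{ordered_real_vector,lattice}"
  assumes "inf u v = 0"
  shows "vl.pprt (u - v) = u"
  using sup_eq_add_pprt[of u v] vl.add_eq_inf_sup[of u v] assms by (simp add: algebra_simps)

lemma labs_eq_pprt_add_pprt_uminus:
  fixes x :: "'a::{ordered_real_vector,lattice}"
  shows "labs x = vl.pprt x + vl.pprt (- x)"
  by (simp only: vl.abs_prts vl.pprt_neg diff_conv_add_uminus)

lemma pprt_le_labs:
  fixes x :: "'a::{ordered_real_vector,lattice}"
  shows "vl.pprt x \<le> labs x"
  by (simp add: vl.pprt_def vl.abs_ge_self)

lemma scaleR_inf_distrib: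
  fixes a b :: "'a::{ordered_real_vector,lattice}"
  assumes "0 \<le> t"
  shows "t *\<^sub>R inf a b = inf (t *\<^sub>R a) (t *\<^sub>R b)"
proof (cases "t = 0")
  case False
  with assms have t: "0 < t" by simp
  show ?thesis
  proof (rule order.antisym)
    show "t *\<^sub>R inf a b \<le> inf (t *\<^sub>R a) (t *\<^sub>R b)"
      using assms by (simp add: scaleR_left_mono)
    have "inverse t *\<^sub>R inf (t *\<^sub>R a) (t *\<^sub>R b) \<le> inf a b"
      using scaleR_left_mono[of "inf (t *\<^sub>R a) (t *\<^sub>R b)" "t *\<^sub>R a" "inverse t"]
        scaleR_left_mono[of "inf (t *\<^sub>R a) (t *\<^sub>R b)" "t *\<^sub>R b" "inverse t"] t
      by simp
    then have "t *\<^sub>R (inverse t *\<^sub>R inf (t *\<^sub>R a) (t *\<^sub>R b)) \<le> t *\<^sub>R inf a b"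
      using assms by (rule scaleR_left_mono)
    with t show "inf (t *\<^sub>R a) (t *\<^sub>R b) \<le> t *\<^sub>R inf a b"
      by simp
  qed
qed simp

lemma scaleR_sup_distrib:
  fixes a b :: "'a::{ordered_real_vector,lattice}"
  assumes "0 \<le> t"
  shows "t *\<^sub>R sup a b = sup (t *\<^sub>R a) (t *\<^sub>R b)"
proof -
  have "t *\<^sub>R sup a b = - (t *\<^sub>R inf (- a) (- b))"
    by (simp only: vl.sup_eq_neg_inf[of a b] scaleR_minus_right)
  also have "\<dots> = sup (t *\<^sub>R a) (t *\<^sub>R b)"
    by (simp only: scaleR_inf_distrib[OF assms] scaleR_minus_right vl.neg_inf_eq_sup minus_minus)
  finally show ?thesis .
qed

lemma labs_scaleR:
  fixes x :: "'a::{ordered_real_vector,lattice}"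
  shows "labs (c *\<^sub>R x) = \<bar>c\<bar> *\<^sub>R labs x"
proof (cases "0 \<le> c")
  case True
  then show ?thesis by (simp add: labs_def scaleR_sup_distrib)
next
  case False
  have "labs (c *\<^sub>R x) = sup (- (c *\<^sub>R x)) (c *\<^sub>R x)"
    by (simp add: labs_def sup_commute)
  also have "\<dots> = (- c) *\<^sub>R labs x"
    using scaleR_sup_distrib[of "- c" x "- x"] False by (simp add: labs_def)
  finally show ?thesis using False by simp
qed

lemma inf_diff_add_eq_diff_labs:
  fixes g x :: "'a::{ordered_real_vector,lattice}"
  shows "inf (g - x) (g + x) = g - labs x"
proof -
  have "g - labs x = g + inf (- x) x"
    by (simp only: labs_def vl.diff_sup_eq_inf minus_minus)
  also have "\<dots> = inf (g - x) (g + x)"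
    by (simp only: vl.add_inf_distrib_left diff_conv_add_uminus)
  finally show ?thesis ..
qed

lemma inf_add_le_add_inf:
  fixes u v w :: "'a::{ordered_real_vector,lattice}"
  assumes "0 \<le> u" "0 \<le> v" "0 \<le> w"
  shows "inf u (v + w) \<le> inf u v + inf u w"
proof -
  have "inf u v + inf u w = inf (inf (u + u) (u + w)) (inf (v + u) (v + w))"
    by (simp add: vl.add_inf_distrib_left vl.add_inf_distrib_right inf_aci)
  moreover have "inf u (v + w) \<le> inf (inf (u + u) (u + w)) (inf (v + u) (v + w))"
    using assms by (auto intro!: le_infI intro: order.trans[OF inf_le1] order.trans[OF inf_le2])
  ultimately show ?thesis by simp
qed

lemma inf_add_nonneg_le:
  fixes a b c :: "'a::{ordered_real_vector,lattice}"
  assumes "0 \<le> c"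
  shows "inf (a + c) b \<le> inf a b + c"
proof -
  have "inf (a + c) b \<le> inf (a + c) (b + c)"
    using assms by (intro inf_mono) auto
  then show ?thesis by (simp add: vl.add_inf_distrib_right)
qed

lemma disjoint_le_add_imp_le:
  fixes u v w :: "'a::{ordered_real_vector,lattice}"
  assumes "0 \<le> u" "0 \<le> v" "0 \<le> w" "u \<le> v + w" "inf u v = 0"
  shows "u \<le> w"
proof -
  have "u = inf u (v + w)" using assms(4) by (simp add: inf.absorb1)
  also have "\<dots> \<le> inf u v + inf u w" using assms by (intro inf_add_le_add_inf)
  also have "\<dots> \<le> w" using assms(5) by simp
  finally show ?thesis .
qed

lemma disjoint_mono:
  fixes u a b :: "'a::{ordered_real_vector,lattice}"
  assumes "0 \<le> u" "u \<le> a" "inf a b = 0" "0 \<le> b"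
  shows "inf u b = 0"
proof -
  have "inf u b \<le> inf a b" using assms by (intro inf_mono) auto
  with assms show ?thesis by (intro order.antisym) auto
qed

lemma disjoint_add:
  fixes a b c :: "'a::{ordered_real_vector,lattice}"
  assumes "0 \<le> a" "0 \<le> b" "0 \<le> c" "inf a b = 0" "inf a c = 0"
  shows "inf a (b + c) = 0"
  using inf_add_le_add_inf[of a b c] assms by (simp add: order.antisym)

lemma disjoint_scaleR:
  fixes a b :: "'a::{ordered_real_vector,lattice}"
  assumes "0 \<le> a" "0 \<le> b" "inf a b = 0" "0 \<le> s" "0 \<le> t"
  shows "inf (s *\<^sub>R a) (t *\<^sub>R b) = 0"
proof -
  have "inf (s *\<^sub>R a) (t *\<^sub>R b) \<le> inf (max s t *\<^sub>R a) (max s t *\<^sub>R b)"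
    using assms by (intro inf_mono scaleR_right_mono) auto
  also have "\<dots> = 0"
    using assms scaleR_inf_distrib[of "max s t" a b] by simp
  finally show ?thesis
    using assms by (intro order.antisym) (simp_all add: scaleR_nonneg_nonneg)
qed

lemma le_add_if_le_inf_disjoint:
  fixes e p p' q X :: "'a::{ordered_real_vector,lattice}"
  assumes "0 \<le> p'" "0 \<le> X" "inf p q = 0" "e \<le> p + X" "e \<le> p' + q"
  shows "e \<le> p' + X"
proof -
  have "e \<le> inf (p + X) (p' + q)" using assms by simp
  also have "\<dots> \<le> inf p (q + p') + X"
    using inf_add_nonneg_le[OF assms(2), of p "q + p'"] by (simp add: add.commute)
  also have "inf p (q + p') \<le> inf p q + p'"
    using inf_add_nonneg_le[OF assms(1), of q p] by (simp add: inf_commute)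
  finally show ?thesis using assms(3) by simp
qed

lemma le_pprt_diff_if_disjoint:
  fixes a v w :: "'a::{ordered_real_vector,lattice}"
  assumes "0 \<le> a" "0 \<le> v" "inf a v = 0" "a \<le> w"
  shows "a \<le> vl.pprt (w - v)"
proof -
  have "w - v \<le> vl.pprt (w - v)"
    by (simp add: vl.pprt_def)
  then have "w \<le> v + vl.pprt (w - v)"
    by (simp add: diff_le_eq add.commute)
  with assms show ?thesis
    using disjoint_le_add_imp_le[of a v "vl.pprt (w - v)"] by simp
qed

lemma inf_pprt_nprt_le_pprt_scaleR_diff:
  fixes X Y :: "'a::{ordered_real_vector,lattice}"
  assumes \<tau>: "0 \<le> \<tau>"
  shows "inf (vl.pprt X) (- vl.nprt Y) \<le> vl.pprt (\<tau> *\<^sub>R X - Y)"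
proof -
  define p where "p = vl.pprt X"
  define n where "n = - vl.nprt X"
  define p' where "p' = vl.pprt Y"
  define n' where "n' = - vl.nprt Y"
  have X: "X = p - n" and Y: "Y = p' - n'"
    unfolding p_def n_def p'_def n'_def diff_minus_eq_add by (rule vl.prts)+
  have p: "0 \<le> p" "inf p n = 0" and n': "0 \<le> n'" "inf n' p' = 0"
    using inf_pprt_nprt[of X] inf_pprt_nprt[of Y] by (simp_all add: p_def n_def p'_def n'_def inf_commute)
  define a where "a = inf p n'"
  have a0: "0 \<le> a" using p n' by (simp add: a_def)
  have "inf a (\<tau> *\<^sub>R n) = 0"
    using disjoint_mono[of a p n] disjoint_scaleR[of a n 1 \<tau>] a0 p \<tau> by (simp add: a_def n_def)
  moreover have "inf a p' = 0"
    using disjoint_mono[of a n' p'] a0 n' by (simp add: a_def p'_def)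
  ultimately have disj: "inf a (\<tau> *\<^sub>R n + p') = 0"
    using a0 \<tau> by (intro disjoint_add) (simp_all add: n_def p'_def scaleR_nonneg_nonpos)
  have "0 \<le> n" and "0 \<le> p'"
    by (simp_all add: n_def p'_def)
  then have "0 \<le> \<tau> *\<^sub>R n + p'"
    using \<tau> by (simp add: scaleR_nonneg_nonneg)
  moreover have "a \<le> \<tau> *\<^sub>R p + n'"
    using \<tau> p by (simp add: a_def add_increasing scaleR_nonneg_nonneg le_infI2)
  ultimately have "a \<le> vl.pprt ((\<tau> *\<^sub>R p + n') - (\<tau> *\<^sub>R n + p'))"
    using disj a0 by (intro le_pprt_diff_if_disjoint)
  also have "(\<tau> *\<^sub>R p + n') - (\<tau> *\<^sub>R n + p') = \<tau> *\<^sub>R X - Y"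
    unfolding X Y by (simp add: algebra_simps)
  finally show ?thesis by (simp add: a_def p_def n'_def)
qed

lemma inf_pprt_diff_scaleR_le:
  fixes x y :: "'a::{ordered_real_vector,lattice}"
  assumes x: "0 \<le> x" and y: "0 \<le> y" and M: "0 < M"
  shows "inf (vl.pprt (y - M *\<^sub>R x)) x \<le> (1 / M) *\<^sub>R y"
proof -
  define p where "p = vl.pprt (y - M *\<^sub>R x)"
  define n where "n = - vl.nprt (y - M *\<^sub>R x)"
  define a where "a = inf p x"
  have p0: "0 \<le> p" and n0: "0 \<le> n" and a0: "0 \<le> a"
    using x by (simp_all add: a_def p_def n_def)
  have "inf a n = 0"
    using inf_pprt_nprt[of "y - M *\<^sub>R x"] a0 n0 unfolding p_def[symmetric] n_def[symmetric]
    by (intro disjoint_mono[of a p]) (simp_all add: a_def)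
  then have disj: "inf (M *\<^sub>R a) n = 0"
    using disjoint_scaleR[OF a0 n0, of M 1] M by simp
  have "M *\<^sub>R a \<le> M *\<^sub>R x"
    using M by (intro scaleR_left_mono) (simp_all add: a_def)
  also have "M *\<^sub>R x = n + y - p"
    using vl.prts[of "y - M *\<^sub>R x"] unfolding p_def[symmetric] n_def
    by (simp add: algebra_simps)
  also have "\<dots> \<le> n + y" using p0 by simp
  finally have "M *\<^sub>R a \<le> n + y" .
  with disj a0 n0 y M have "M *\<^sub>R a \<le> y"
    using disjoint_le_add_imp_le[of "M *\<^sub>R a" n y] by (simp add: scaleR_nonneg_nonneg)
  then have "(1 / M) *\<^sub>R (M *\<^sub>R a) \<le> (1 / M) *\<^sub>R y"
    using M by (intro scaleR_left_mono) simp_all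
  with M show ?thesis by (simp add: a_def p_def)
qed

lemma pprt_add_nprt_diff_le:
  fixes x y :: "'a::{ordered_real_vector,lattice}"
  assumes x: "0 \<le> x" and y: "0 \<le> y" and M: "0 < M"
  shows "vl.pprt (x + vl.nprt (y - (M + 1) *\<^sub>R x)) \<le> (1 / M) *\<^sub>R y"
proof -
  define r where "r = y - (M + 1) *\<^sub>R x"
  have "vl.nprt r \<le> r" and "vl.nprt r \<le> 0"
    by (simp_all add: vl.nprt_def)
  then have "x + vl.nprt r \<le> y - M *\<^sub>R x" and "x + vl.nprt r \<le> x"
    by (simp_all add: r_def algebra_simps add_left_mono)
  then have "vl.pprt (x + vl.nprt r) \<le> vl.pprt (y - M *\<^sub>R x)"
    and "vl.pprt (x + vl.nprt r) \<le> vl.pprt x"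
    by (simp_all only: vl.pprt_mono)
  then have "vl.pprt (x + vl.nprt r) \<le> inf (vl.pprt (y - M *\<^sub>R x)) x"
    using x by simp
  also have "\<dots> \<le> (1 / M) *\<^sub>R y"
    by (rule inf_pprt_diff_scaleR_le[OF x y M])
  finally show ?thesis by (simp add: r_def)
qed

lemma diff_inf_inf_le:
  fixes x a b :: "'a::{ordered_real_vector,lattice}"
  shows "x - inf x (inf a b) \<le> vl.pprt (x - a) + vl.pprt (x - b)"
proof -
  have "x - inf x (inf a b) = sup (x - x) (sup (x - a) (x - b))"
    by (simp only: vl.diff_inf_eq_sup vl.neg_inf_eq_sup vl.add_sup_distrib_left diff_conv_add_uminus)
  also have "\<dots> \<le> vl.pprt (x - a) + vl.pprt (x - b)"
    by (simp add: vl.pprt_def add_increasing add_increasing2)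
  finally show ?thesis .
qed

lemma diff_inf_nprt_le:
  fixes x y z :: "'a::{ordered_real_vector,lattice}"
  assumes "0 \<le> x" "0 \<le> y" "0 \<le> z" "0 < M"
  shows "x - inf x (inf (- vl.nprt (y - (M + 1) *\<^sub>R x)) (- vl.nprt (z - (M + 1) *\<^sub>R x)))
    \<le> (1 / M) *\<^sub>R (y + z)"
proof -
  have "x - inf x (inf (- vl.nprt (y - (M + 1) *\<^sub>R x)) (- vl.nprt (z - (M + 1) *\<^sub>R x)))
      \<le> vl.pprt (x + vl.nprt (y - (M + 1) *\<^sub>R x)) + vl.pprt (x + vl.nprt (z - (M + 1) *\<^sub>R x))"
    using diff_inf_inf_le[of x "- vl.nprt (y - (M + 1) *\<^sub>R x)" "- vl.nprt (z - (M + 1) *\<^sub>R x)"]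
    by simp
  also have "\<dots> \<le> (1 / M) *\<^sub>R y + (1 / M) *\<^sub>R z"
    using assms by (intro add_mono pprt_add_nprt_diff_le)
  finally show ?thesis by (simp add: scaleR_add_right)
qed

lemma inf_add_pprt_labs_diff_le:
  fixes h c :: "'a::{ordered_real_vector,lattice}"
  assumes h: "0 \<le> h"
  shows "inf (h + vl.pprt c) (labs (h - c)) \<le> sup c h"
proof -
  have "vl.pprt (h - c) \<le> h - vl.nprt c"
  proof -
    have "vl.nprt c \<le> c"
      by (simp add: vl.nprt_def)
    then have "h - c \<le> h - vl.nprt c"
      by (rule diff_left_mono)
    moreover have "0 \<le> h - vl.nprt c"
      using add_nonneg_nonneg[OF h, of "- vl.nprt c"] by simp
    ultimately show ?thesis by (simp add: vl.pprt_def)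
  qed
  have "inf (h + vl.pprt c) (labs (h - c))
      = inf (h + vl.pprt c) (vl.pprt (h - c) + vl.pprt (c - h))"
    by (simp add: labs_eq_pprt_add_pprt_uminus)
  also have "\<dots> \<le> inf (h + vl.pprt c) (vl.pprt (h - c)) + inf (h + vl.pprt c) (vl.pprt (c - h))"
    using h by (intro inf_add_le_add_inf) simp_all
  also have "\<dots> \<le> inf (h + vl.pprt c) (h - vl.nprt c) + vl.pprt (c - h)"
    using \<open>vl.pprt (h - c) \<le> h - vl.nprt c\<close> by (intro add_mono inf_mono) simp_all
  also have "inf (h + vl.pprt c) (h - vl.nprt c) = h + inf (vl.pprt c) (- vl.nprt c)"
    by (simp only: vl.add_inf_distrib_left diff_conv_add_uminus)
  also have "\<dots> = h"
    by (simp add: inf_pprt_nprt)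
  also have "h + vl.pprt (c - h) = sup c h"
    by (rule sup_eq_add_pprt[symmetric])
  finally show ?thesis .
qed

fun grid_min :: "'a::{ordered_real_vector,lattice} \<Rightarrow> 'a \<Rightarrow> real \<Rightarrow> nat \<Rightarrow> 'a" where
  "grid_min x y d 0 = labs y"
| "grid_min x y d (Suc k) = inf (grid_min x y d k) (labs ((real (Suc k) * d) *\<^sub>R x - y))"

lemma grid_min_nonneg: "0 \<le> grid_min x y d N"
  by (induction N) simp_all

lemma grid_min_greatest:
  fixes x y :: "'a::{ordered_real_vector,lattice}" and \<Phi> :: "'a \<Rightarrow> 'b::lattice"
  assumes \<Phi>_inf: "\<And>a b. 0 \<le> a \<Longrightarrow> 0 \<le> b \<Longrightarrow> \<Phi> (inf a b) = inf (\<Phi> a) (\<Phi> b)"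
    and le: "\<And>k. k \<le> N \<Longrightarrow> e \<le> \<Phi> (labs ((real k * d) *\<^sub>R x - y))"
  shows "e \<le> \<Phi> (grid_min x y d N)"
  using le
proof (induction N)
  case 0
  then show ?case using "0.prems"[of 0] by simp
next
  case (Suc N)
  then have "e \<le> \<Phi> (grid_min x y d N)" and "e \<le> \<Phi> (labs ((real (Suc N) * d) *\<^sub>R x - y))"
    using Suc.prems[of "Suc N"] by (simp_all del: of_nat_Suc)
  then show ?case by (simp add: \<Phi>_inf grid_min_nonneg)
qed

lemma grid_min_le:
  fixes x y :: "'a::{ordered_real_vector,lattice}"
  assumes x: "0 \<le> x" and d: "0 \<le> d"
  shows "grid_min x y d N \<le> d *\<^sub>R x - vl.nprt y + vl.pprt (y - (real N * d) *\<^sub>R x)"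
proof (induction N)
  case 0
  have "0 \<le> d *\<^sub>R x" using x d by (simp add: scaleR_nonneg_nonneg)
  then show ?case by (simp add: vl.abs_prts)
next
  case (Suc N)
  define h where "h = d *\<^sub>R x"
  define c where "c = y - (real N * d) *\<^sub>R x"
  have h0: "0 \<le> h" using x d by (simp add: h_def scaleR_nonneg_nonneg)
  have "grid_min x y d (Suc N) = inf (grid_min x y d N) (labs (h - c))"
    by (simp add: h_def c_def algebra_simps)
  also have "\<dots> \<le> inf ((h + vl.pprt c) + - vl.nprt y) (labs (h - c))"
    using Suc.IH by (intro inf_mono) (simp_all add: h_def c_def algebra_simps)
  also have "\<dots> \<le> inf (h + vl.pprt c) (labs (h - c)) + - vl.nprt y"
    by (rule inf_add_nonneg_le) simp
  also have "\<dots> \<le> h + vl.pprt (c - h) + - vl.nprt y"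
    using inf_add_pprt_labs_diff_le[OF h0, of c] by (simp add: sup_eq_add_pprt)
  also have "\<dots> = d *\<^sub>R x - vl.nprt y + vl.pprt (y - (real (Suc N) * d) *\<^sub>R x)"
    by (simp add: h_def c_def algebra_simps)
  finally show ?case .
qed

lemma grid_min_le_scaleR:
  fixes x y :: "'a::{ordered_real_vector,lattice}"
  assumes "0 \<le> x" "0 \<le> y" "0 \<le> d" "y \<le> (real N * d) *\<^sub>R x"
  shows "grid_min x y d N \<le> d *\<^sub>R x"
  using grid_min_le[of x d y N] assms by simp

lemma archimedean_vl_eq_0:
  fixes a b :: "'a::{ordered_real_vector,lattice}"
  assumes arch: "archimedean_vl TYPE('a)" and a: "0 \<le> a"
    and le: "\<And>n::nat. 1 \<le> n \<Longrightarrow> a \<le> (1 / real n) *\<^sub>R b"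
  shows "a = 0"
proof -
  have "real n *\<^sub>R a \<le> b" for n :: nat
  proof (cases "n = 0")
    case True
    then show ?thesis using le[of 1] a by simp
  next
    case False
    then have "real n *\<^sub>R a \<le> real n *\<^sub>R ((1 / real n) *\<^sub>R b)"
      using le[of n] by (intro scaleR_left_mono) auto
    with False show ?thesis by simp
  qed
  with arch a show ?thesis unfolding archimedean_vl_def by blast
qed

section \<open>Greatest lower bounds\<close>

lemma is_glb_unique: "is_glb S a \<Longrightarrow> is_glb S b \<Longrightarrow> a = b"
  unfolding is_glb_def by (meson order.antisym)

lemma is_glb_nonneg:
  fixes g :: "'a::{order,zero}"
  assumes "is_glb S g" "\<And>s. s \<in> S \<Longrightarrow> 0 \<le> s"
  shows "0 \<le> g"
  using assms unfolding is_glb_def by blast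

lemma is_glb_image_add:
  fixes g c :: "'a::ordered_ab_group_add"
  assumes "is_glb A g"
  shows "is_glb ((\<lambda>s. s + c) ` A) (g + c)"
  unfolding is_glb_def
proof (intro conjI ballI allI impI)
  show "g + c \<le> t" if "t \<in> (\<lambda>s. s + c) ` A" for t
    using assms that unfolding is_glb_def by auto
  show "b \<le> g + c" if "\<forall>t\<in>(\<lambda>s. s + c) ` A. b \<le> t" for b
  proof -
    have "\<forall>s\<in>A. b - c \<le> s" using that by (auto simp: diff_le_eq)
    then have "b - c \<le> g" using assms unfolding is_glb_def by blast
    then show ?thesis by (simp add: diff_le_eq)
  qed
qed

lemma is_glb_Un_inf:
  fixes a b :: "'a::lattice"
  assumes "is_glb A a" "is_glb B b"
  shows "is_glb (A \<union> B) (inf a b)"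
  using assms unfolding is_glb_def by (auto intro: le_infI1 le_infI2)

lemma gm_set_nonneg:
  fixes u v :: "'a::ordered_real_vector"
  assumes "0 \<le> u" "0 \<le> v" "s \<in> gm_set u v"
  shows "0 \<le> s"
  using assms unfolding gm_set_def by (auto intro!: add_nonneg_nonneg scaleR_nonneg_nonneg)

lemma quadratic_set_eq_Un:
  fixes A B C :: "'a::ordered_real_vector"
  shows "{inverse \<bar>l\<bar> *\<^sub>R ((l * l) *\<^sub>R A - (2 * l) *\<^sub>R C + B) | l::real. l \<noteq> 0}
       = (\<lambda>s. s + - (2 *\<^sub>R C)) ` gm_set A B \<union> (\<lambda>s. s + 2 *\<^sub>R C) ` gm_set A B"
    (is "?L = ?R")
proof -
  have pos: "inverse \<bar>l\<bar> *\<^sub>R ((l * l) *\<^sub>R A - (2 * l) *\<^sub>R C + B) = l *\<^sub>R A + inverse l *\<^sub>R B + - (2 *\<^sub>R C)"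
    if "0 < l" for l
    using that by (simp add: algebra_simps)
  have neg: "inverse \<bar>l\<bar> *\<^sub>R ((l * l) *\<^sub>R A - (2 * l) *\<^sub>R C + B) = (- l) *\<^sub>R A + inverse (- l) *\<^sub>R B + 2 *\<^sub>R C"
    if "l < 0" for l
    using that by (simp add: algebra_simps)
  show ?thesis
  proof
    show "?L \<subseteq> ?R"
    proof
      fix s assume "s \<in> ?L"
      then obtain l where l: "l \<noteq> 0" "s = inverse \<bar>l\<bar> *\<^sub>R ((l * l) *\<^sub>R A - (2 * l) *\<^sub>R C + B)"
        by blast
      show "s \<in> ?R"
      proof (cases "0 < l")
        case True
        then show ?thesis using l pos unfolding gm_set_def by blast
      next
        case False
        with l have "l < 0" "0 < - l" by simp_all
        then show ?thesis using l neg unfolding gm_set_def by blast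
      qed
    qed
    show "?R \<subseteq> ?L"
    proof
      fix s assume "s \<in> ?R"
      then obtain \<theta> where \<theta>: "0 < \<theta>"
        and s: "s = \<theta> *\<^sub>R A + inverse \<theta> *\<^sub>R B + - (2 *\<^sub>R C) \<or> s = \<theta> *\<^sub>R A + inverse \<theta> *\<^sub>R B + 2 *\<^sub>R C"
        unfolding gm_set_def by blast
      from s show "s \<in> ?L"
      proof
        assume "s = \<theta> *\<^sub>R A + inverse \<theta> *\<^sub>R B + - (2 *\<^sub>R C)"
        then have "s = inverse \<bar>\<theta>\<bar> *\<^sub>R ((\<theta> * \<theta>) *\<^sub>R A - (2 * \<theta>) *\<^sub>R C + B)"
          using pos[OF \<theta>] by simp
        with \<theta> show ?thesis by blast
      next
        assume "s = \<theta> *\<^sub>R A + inverse \<theta> *\<^sub>R B + 2 *\<^sub>R C"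
        then have "s = inverse \<bar>- \<theta>\<bar> *\<^sub>R ((- \<theta> * - \<theta>) *\<^sub>R A - (2 * - \<theta>) *\<^sub>R C + B)"
          using neg[of "- \<theta>"] \<theta> by simp
        moreover have "- \<theta> \<noteq> 0" using \<theta> by simp
        ultimately show ?thesis by blast
      qed
    qed
  qed
qed

lemma is_glb_quadratic:
  fixes A B C g :: "'a::{ordered_real_vector,lattice}"
  assumes "is_glb (gm_set A B) g"
  shows "is_glb {inverse \<bar>l\<bar> *\<^sub>R ((l * l) *\<^sub>R A - (2 * l) *\<^sub>R C + B) | l::real. l \<noteq> 0}
           (g - 2 *\<^sub>R labs C)"
proof -
  have "g - 2 *\<^sub>R labs C = inf (g + - (2 *\<^sub>R C)) (g + 2 *\<^sub>R C)"
    using inf_diff_add_eq_diff_labs[of g "2 *\<^sub>R C"] by (simp add: labs_scaleR)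
  then show ?thesis
    using is_glb_Un_inf[OF is_glb_image_add[OF assms, of "- (2 *\<^sub>R C)"] is_glb_image_add[OF assms, of "2 *\<^sub>R C"]]
    by (simp only: quadratic_set_eq_Un)
qed

lemma is_glb_gmean:
  fixes u v :: "'a::{ordered_real_vector,lattice}"
  assumes "geometric_mean_closed TYPE('a)" "0 \<le> u" "0 \<le> v"
  shows "is_glb (gm_set u v) (2 *\<^sub>R (u \<boxtimes> v))"
proof -
  obtain a where a: "is_glb (gm_set u v) a"
    using assms unfolding geometric_mean_closed_def by blast
  then have "(THE a. is_glb (gm_set u v) a) = a"
    using is_glb_unique by blast
  with a show ?thesis by (simp add: gmean_def)
qed

lemma gmean_nonneg:
  fixes u v :: "'a::{ordered_real_vector,lattice}"
  assumes "geometric_mean_closed TYPE('a)" "0 \<le> u" "0 \<le> v"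
  shows "0 \<le> u \<boxtimes> v"
  using is_glb_nonneg[OF is_glb_gmean[OF assms] gm_set_nonneg[OF assms(2,3)]]
  by (simp add: zero_le_scaleR_iff)

section \<open>Positive orthomorphisms\<close>

definition pos_orthomorphism :: "('a::{ordered_real_vector,lattice} \<Rightarrow> 'a) \<Rightarrow> bool" where
  "pos_orthomorphism T \<longleftrightarrow> linear T \<and> (\<forall>x. 0 \<le> x \<longrightarrow> 0 \<le> T x)
     \<and> (\<forall>x y. 0 \<le> x \<longrightarrow> 0 \<le> y \<longrightarrow> inf x y = 0 \<longrightarrow> inf (T x) y = 0)"

lemma
  assumes "pos_orthomorphism T"
  shows pos_orthomorphism_linear: "linear T"
    and pos_orthomorphism_nonneg: "0 \<le> x \<Longrightarrow> 0 \<le> T x"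
    and pos_orthomorphism_disjoint: "0 \<le> x \<Longrightarrow> 0 \<le> y \<Longrightarrow> inf x y = 0 \<Longrightarrow> inf (T x) y = 0"
  using assms unfolding pos_orthomorphism_def by blast+

lemma pos_orthomorphism_mono:
  assumes "pos_orthomorphism T" "x \<le> y"
  shows "T x \<le> T y"
  using pos_orthomorphism_nonneg[OF assms(1), of "y - x"] assms
  by (simp add: linear_diff[OF pos_orthomorphism_linear])

lemma pos_orthomorphism_pprt:
  assumes T: "pos_orthomorphism T"
  shows "T (vl.pprt x) = vl.pprt (T x)"
proof -
  have "inf (T (vl.pprt x)) (- vl.nprt x) = 0"
    using inf_pprt_nprt[of x] by (intro pos_orthomorphism_disjoint[OF T]) simp_all
  then have "inf (T (- vl.nprt x)) (T (vl.pprt x)) = 0"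
    by (intro pos_orthomorphism_disjoint[OF T]) (simp_all add: inf_commute pos_orthomorphism_nonneg[OF T])
  then have "vl.pprt (T (vl.pprt x) - T (- vl.nprt x)) = T (vl.pprt x)"
    by (simp add: pprt_diff_disjoint inf_commute)
  moreover have "T x = T (vl.pprt x) - T (- vl.nprt x)"
    using vl.prts[of x] linear_diff[OF pos_orthomorphism_linear[OF T]]
    by (metis diff_minus_eq_add)
  ultimately show ?thesis by simp
qed

lemma pos_orthomorphism_nprt:
  assumes T: "pos_orthomorphism T"
  shows "T (vl.nprt x) = vl.nprt (T x)"
  using pos_orthomorphism_pprt[OF T, of "- x"] linear_neg[OF pos_orthomorphism_linear[OF T]]
  by (metis vl.pprt_neg minus_minus)

lemma pos_orthomorphism_labs:
  "pos_orthomorphism T \<Longrightarrow> T (labs x) = labs (T x)"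
  by (simp add: vl.abs_prts linear_diff[OF pos_orthomorphism_linear]
      pos_orthomorphism_pprt pos_orthomorphism_nprt)

lemma pos_orthomorphism_inf:
  "pos_orthomorphism T \<Longrightarrow> T (inf x y) = inf (T x) (T y)"
  by (simp add: inf_eq_diff_pprt linear_diff[OF pos_orthomorphism_linear] pos_orthomorphism_pprt)

lemma pos_orthomorphism_add:
  assumes T: "pos_orthomorphism T" and S: "pos_orthomorphism S"
  shows "pos_orthomorphism (\<lambda>x. T x + S x)"
  unfolding pos_orthomorphism_def
proof (intro conjI allI impI)
  show "linear (\<lambda>x. T x + S x)"
    using T S by (intro linear_compose_add) (simp_all add: pos_orthomorphism_linear)
  show "0 \<le> T x + S x" if "0 \<le> x" for x
    using that T S by (simp add: pos_orthomorphism_nonneg add_nonneg_nonneg)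
  show "inf (T x + S x) y = 0" if "0 \<le> x" "0 \<le> y" "inf x y = 0" for x y
  proof -
    have "inf y (T x) = 0" and "inf y (S x) = 0"
      using pos_orthomorphism_disjoint[OF T that] pos_orthomorphism_disjoint[OF S that]
      by (simp_all add: inf_commute)
    then have "inf y (T x + S x) = 0"
      using that T S by (intro disjoint_add) (simp_all add: pos_orthomorphism_nonneg)
    then show ?thesis by (simp add: inf_commute)
  qed
qed

lemma pos_orthomorphism_scaleR:
  fixes c :: real
  assumes "0 \<le> c"
  shows "pos_orthomorphism (\<lambda>x::'a::{ordered_real_vector,lattice}. c *\<^sub>R x)"
  unfolding pos_orthomorphism_def
  using assms disjoint_scaleR[where s = c and t = 1]
  by (auto simp: linear_scale_self scaleR_nonneg_nonneg)

lemma pos_orthomorphism_comp: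
  "pos_orthomorphism T \<Longrightarrow> pos_orthomorphism S \<Longrightarrow> pos_orthomorphism (\<lambda>x. S (T x))"
  unfolding pos_orthomorphism_def
  by (auto intro: linear_compose[unfolded comp_def])

lemma pos_orthomorphism_labs_diff_scaleR_le:
  assumes T: "pos_orthomorphism T" and c: "0 \<le> c"
  shows "labs (T z - c *\<^sub>R z) \<le> T (labs z) + c *\<^sub>R labs z"
  using vl.abs_triangle_ineq4[of "T z" "c *\<^sub>R z"] c
  by (simp add: pos_orthomorphism_labs[OF T] labs_scaleR)

lemma pos_orthomorphism_inf_pprt_nprt_le:
  assumes T: "pos_orthomorphism T" and c: "0 \<le> c" and \<tau>: "0 \<le> \<tau>"
  shows "inf (vl.pprt (T x - c *\<^sub>R x)) (- vl.nprt (T y - c *\<^sub>R y))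
    \<le> T (labs (\<tau> *\<^sub>R x - y)) + c *\<^sub>R labs (\<tau> *\<^sub>R x - y)"
proof -
  have lT: "linear T" by (rule pos_orthomorphism_linear[OF T])
  have "inf (vl.pprt (T x - c *\<^sub>R x)) (- vl.nprt (T y - c *\<^sub>R y))
      \<le> vl.pprt (\<tau> *\<^sub>R (T x - c *\<^sub>R x) - (T y - c *\<^sub>R y))"
    using \<tau> by (rule inf_pprt_nprt_le_pprt_scaleR_diff)
  also have "\<tau> *\<^sub>R (T x - c *\<^sub>R x) - (T y - c *\<^sub>R y) = T (\<tau> *\<^sub>R x - y) - c *\<^sub>R (\<tau> *\<^sub>R x - y)"
    by (simp add: linear_diff[OF lT] linear_scale[OF lT] algebra_simps)
  also have "vl.pprt \<dots> \<le> labs \<dots>"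
    by (rule pprt_le_labs)
  also have "\<dots> \<le> T (labs (\<tau> *\<^sub>R x - y)) + c *\<^sub>R labs (\<tau> *\<^sub>R x - y)"
    by (rule pos_orthomorphism_labs_diff_scaleR_le[OF T c])
  finally show ?thesis .
qed

lemma pos_orthomorphism_commutator_le:
  assumes T: "pos_orthomorphism T" and S: "pos_orthomorphism S"
    and \<tau>: "0 \<le> \<tau>" "\<tau> \<le> K" and \<mu>: "0 \<le> \<mu>" "\<mu> \<le> K"
  shows "labs (S (T u) - T (S u))
      \<le> (S (labs (\<tau> *\<^sub>R u - T u)) + K *\<^sub>R labs (\<tau> *\<^sub>R u - T u))
        + (T (labs (\<mu> *\<^sub>R u - S u)) + K *\<^sub>R labs (\<mu> *\<^sub>R u - S u))"
proof -
  define r where "r = \<tau> *\<^sub>R u - T u"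
  define q where "q = \<mu> *\<^sub>R u - S u"
  have lT: "linear T" and lS: "linear S"
    using T S by (simp_all add: pos_orthomorphism_linear)
  have "S (T u) - T (S u) = (T q - \<tau> *\<^sub>R q) - (S r - \<mu> *\<^sub>R r)"
    by (simp add: r_def q_def linear_diff[OF lT] linear_diff[OF lS]
        linear_scale[OF lT] linear_scale[OF lS] algebra_simps)
  then have "labs (S (T u) - T (S u)) \<le> labs (S r - \<mu> *\<^sub>R r) + labs (T q - \<tau> *\<^sub>R q)"
    using vl.abs_triangle_ineq4[of "T q - \<tau> *\<^sub>R q" "S r - \<mu> *\<^sub>R r"] by (simp add: add.commute)
  also have "\<dots> \<le> (S (labs r) + \<mu> *\<^sub>R labs r) + (T (labs q) + \<tau> *\<^sub>R labs q)"
    by (intro add_mono pos_orthomorphism_labs_diff_scaleR_le T S \<tau>(1) \<mu>(1))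
  also have "\<dots> \<le> (S (labs r) + K *\<^sub>R labs r) + (T (labs q) + K *\<^sub>R labs q)"
    using \<tau> \<mu> by (intro add_mono add_left_mono scaleR_right_mono) simp_all
  finally show ?thesis by (simp add: r_def q_def)
qed

lemma pos_orthomorphism_commutator_le_grid_min:
  assumes T: "pos_orthomorphism T" and S: "pos_orthomorphism S"
    and d: "0 \<le> d" and K: "real n * d \<le> K"
  shows "labs (S (T u) - T (S u))
      \<le> (S (grid_min u (T u) d n) + K *\<^sub>R grid_min u (T u) d n)
        + (T (grid_min u (S u) d n) + K *\<^sub>R grid_min u (S u) d n)"
proof -
  define \<Phi>\<^sub>1 where "\<Phi>\<^sub>1 z = S z + K *\<^sub>R z" for z
  define \<Phi>\<^sub>2 where "\<Phi>\<^sub>2 z = T z + K *\<^sub>R z" for z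
  have "0 \<le> K" using d K by (meson order.trans mult_nonneg_nonneg of_nat_0_le_iff)
  then have \<Phi>\<^sub>1: "pos_orthomorphism \<Phi>\<^sub>1" and \<Phi>\<^sub>2: "pos_orthomorphism \<Phi>\<^sub>2"
    unfolding \<Phi>\<^sub>1_def \<Phi>\<^sub>2_def using T S by (simp_all add: pos_orthomorphism_add pos_orthomorphism_scaleR)
  have grid: "0 \<le> real k * d \<and> real k * d \<le> K" if "k \<le> n" for k
    using that d K by (simp add: order.trans[OF mult_right_mono[of "real k" "real n" d]])
  define D where "D = labs (S (T u) - T (S u))"
  have step: "D - \<Phi>\<^sub>2 (labs (\<mu> *\<^sub>R u - S u)) \<le> \<Phi>\<^sub>1 (grid_min u (T u) d n)"
    if "0 \<le> \<mu>" "\<mu> \<le> K" for \<mu>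
  proof (rule grid_min_greatest)
    show "D - \<Phi>\<^sub>2 (labs (\<mu> *\<^sub>R u - S u)) \<le> \<Phi>\<^sub>1 (labs ((real k * d) *\<^sub>R u - T u))"
      if "k \<le> n" for k
      using pos_orthomorphism_commutator_le[OF T S _ _ \<open>0 \<le> \<mu>\<close> \<open>\<mu> \<le> K\<close>, of "real k * d" u]
        grid[OF that]
      by (simp add: D_def \<Phi>\<^sub>1_def \<Phi>\<^sub>2_def diff_le_eq add.commute)
  qed (simp add: pos_orthomorphism_inf[OF \<Phi>\<^sub>1])
  have "D - \<Phi>\<^sub>1 (grid_min u (T u) d n) \<le> \<Phi>\<^sub>2 (grid_min u (S u) d n)"
  proof (rule grid_min_greatest)
    show "D - \<Phi>\<^sub>1 (grid_min u (T u) d n) \<le> \<Phi>\<^sub>2 (labs ((real k * d) *\<^sub>R u - S u))"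
      if "k \<le> n" for k
      using step[of "real k * d"] grid[OF that] by (simp add: diff_le_eq add.commute)
  qed (simp add: pos_orthomorphism_inf[OF \<Phi>\<^sub>2])
  then show ?thesis
    by (simp add: D_def \<Phi>\<^sub>1_def \<Phi>\<^sub>2_def diff_le_eq add.commute)
qed

context
  assumes arch: "archimedean_vl TYPE('a::{ordered_real_vector,lattice})"
begin

lemma pos_orthomorphism_pprt_nprt_disjoint:
  fixes T :: "'a \<Rightarrow> 'a"
  assumes T: "pos_orthomorphism T" and c: "0 \<le> c" and x: "0 \<le> x" and y: "0 \<le> y"
  shows "inf (vl.pprt (T x - c *\<^sub>R x)) (- vl.nprt (T y - c *\<^sub>R y)) = 0"
proof -
  define \<Phi> where "\<Phi> z = T z + c *\<^sub>R z" for z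
  have \<Phi>: "pos_orthomorphism \<Phi>"
    unfolding \<Phi>_def by (rule pos_orthomorphism_add[OF T pos_orthomorphism_scaleR[OF c]])
  have l\<Phi>: "linear \<Phi>" by (rule pos_orthomorphism_linear[OF \<Phi>])
  define a where "a = inf (vl.pprt (T x - c *\<^sub>R x)) (- vl.nprt (T y - c *\<^sub>R y))"
  have a0: "0 \<le> a" by (simp add: a_def)
  \<comment> \<open>\<open>a\<close> lies below \<open>\<Phi> |\<tau>x - y|\<close> for every \<open>\<tau> \<ge> 0\<close>; minimising over \<open>\<tau> = k/n\<close> gives
    \<open>a \<le> \<Phi> (x + y) / n\<close>.\<close>
  have a_le_grid: "a \<le> \<Phi> (labs (\<tau> *\<^sub>R x - y))" if "0 \<le> \<tau>" for \<tau>
    unfolding a_def \<Phi>_def using T c that by (rule pos_orthomorphism_inf_pprt_nprt_le)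
  have a_le_x: "a \<le> \<Phi> x"
  proof -
    have "a \<le> vl.pprt (T x - c *\<^sub>R x)" by (simp add: a_def)
    also have "\<dots> \<le> vl.pprt (T x)"
      using c x by (intro vl.pprt_mono) (simp add: scaleR_nonneg_nonneg)
    also have "\<dots> \<le> \<Phi> x"
      using pos_orthomorphism_nonneg[OF T x] c x by (simp add: \<Phi>_def scaleR_nonneg_nonneg)
    finally show ?thesis .
  qed
  have "a \<le> (1 / real n) *\<^sub>R \<Phi> (x + y)" if n: "1 \<le> n" for n :: nat
  proof -
    define d where "d = 1 / real n"
    have d: "0 \<le> d" by (simp add: d_def)
    have "a \<le> \<Phi> (grid_min x y d (n * n))"
      by (rule grid_min_greatest) (simp_all add: pos_orthomorphism_inf[OF \<Phi>] a_le_grid d)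
    also have "\<dots> \<le> \<Phi> (d *\<^sub>R x + vl.pprt (y - real n *\<^sub>R x))"
      using grid_min_le[OF x d, of y "n * n"] y n
      by (intro pos_orthomorphism_mono[OF \<Phi>]) (simp add: d_def)
    also have "\<dots> = \<Phi> (vl.pprt (y - real n *\<^sub>R x)) + \<Phi> (d *\<^sub>R x)"
      by (simp add: linear_add[OF l\<Phi>] add.commute)
    finally have "a \<le> inf (\<Phi> (vl.pprt (y - real n *\<^sub>R x)) + \<Phi> (d *\<^sub>R x)) (\<Phi> x)"
      using a_le_x by simp
    also have "\<dots> \<le> inf (\<Phi> (vl.pprt (y - real n *\<^sub>R x))) (\<Phi> x) + \<Phi> (d *\<^sub>R x)"
      using x d by (intro inf_add_nonneg_le pos_orthomorphism_nonneg[OF \<Phi>]) (simp add: scaleR_nonneg_nonneg)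
    also have "inf (\<Phi> (vl.pprt (y - real n *\<^sub>R x))) (\<Phi> x) = \<Phi> (inf (vl.pprt (y - real n *\<^sub>R x)) x)"
      by (simp add: pos_orthomorphism_inf[OF \<Phi>])
    also have "\<dots> \<le> \<Phi> ((1 / real n) *\<^sub>R y)"
      using inf_pprt_diff_scaleR_le[OF x y, of "real n"] n by (simp add: pos_orthomorphism_mono[OF \<Phi>])
    finally show ?thesis
      by (simp add: d_def linear_scale[OF l\<Phi>] linear_add[OF l\<Phi>] scaleR_add_right add.commute)
  qed
  then have "a = 0" by (rule archimedean_vl_eq_0[OF arch a0])
  then show ?thesis by (simp add: a_def)
qed

lemma pos_orthomorphism_le_scaleR_below_nprt:
  fixes T :: "'a \<Rightarrow> 'a"
  assumes T: "pos_orthomorphism T" and K: "0 \<le> K" and x: "0 \<le> x"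
    and u: "0 \<le> u" and ux: "u \<le> - vl.nprt (T x - K *\<^sub>R x)"
  shows "T u \<le> K *\<^sub>R u"
proof -
  define w where "w = vl.pprt (T u - K *\<^sub>R u)"
  have w0: "0 \<le> w" by (simp add: w_def)
  have "inf w (- vl.nprt (T x - K *\<^sub>R x)) = 0"
    unfolding w_def by (rule pos_orthomorphism_pprt_nprt_disjoint[OF T K u x])
  then have "inf u w = 0"
    using disjoint_mono[OF u ux, of w] w0 by (simp add: inf_commute)
  then have "inf (T u) w = 0"
    by (rule pos_orthomorphism_disjoint[OF T u w0])
  moreover have "w \<le> T u"
  proof -
    have "w \<le> vl.pprt (T u)"
      unfolding w_def using K u by (intro vl.pprt_mono) (simp add: scaleR_nonneg_nonneg)
    then show ?thesis using pos_orthomorphism_nonneg[OF T u] by simp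
  qed
  ultimately have "w = 0"
    using w0 inf_mono[OF \<open>w \<le> T u\<close> order_refl[of w]] by (simp add: order.antisym)
  then show ?thesis by (simp add: w_def vl.le_zero_iff_zero_pprt[symmetric])
qed

lemma pos_orthomorphism_commute_bounded:
  fixes T S :: "'a \<Rightarrow> 'a"
  assumes T: "pos_orthomorphism T" and S: "pos_orthomorphism S" and K: "0 < K"
    and u: "0 \<le> u" and Tu: "T u \<le> K *\<^sub>R u" and Su: "S u \<le> K *\<^sub>R u"
  shows "S (T u) = T (S u)"
proof -
  define \<Phi>\<^sub>1 where "\<Phi>\<^sub>1 z = S z + K *\<^sub>R z" for z
  define \<Phi>\<^sub>2 where "\<Phi>\<^sub>2 z = T z + K *\<^sub>R z" for z
  have \<Phi>\<^sub>1: "pos_orthomorphism \<Phi>\<^sub>1" and \<Phi>\<^sub>2: "pos_orthomorphism \<Phi>\<^sub>2"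
    unfolding \<Phi>\<^sub>1_def \<Phi>\<^sub>2_def using K T S by (simp_all add: pos_orthomorphism_add pos_orthomorphism_scaleR)
  define D where "D = labs (S (T u) - T (S u))"
  have bound: "D \<le> (1 / real n) *\<^sub>R (K *\<^sub>R (\<Phi>\<^sub>1 u + \<Phi>\<^sub>2 u))" if n: "1 \<le> n" for n :: nat
  proof -
    define d where "d = K / real n"
    have d: "0 \<le> d" and nd: "real n * d = K" using K n by (simp_all add: d_def)
    have "D \<le> \<Phi>\<^sub>1 (grid_min u (T u) d n) + \<Phi>\<^sub>2 (grid_min u (S u) d n)"
      using pos_orthomorphism_commutator_le_grid_min[OF T S d, of n K u] nd
      by (simp add: D_def \<Phi>\<^sub>1_def \<Phi>\<^sub>2_def)
    also have "\<dots> \<le> \<Phi>\<^sub>1 (d *\<^sub>R u) + \<Phi>\<^sub>2 (d *\<^sub>R u)"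
    proof -
      have "grid_min u (T u) d n \<le> d *\<^sub>R u" and "grid_min u (S u) d n \<le> d *\<^sub>R u"
        using Tu Su nd d u pos_orthomorphism_nonneg[OF T u] pos_orthomorphism_nonneg[OF S u]
        by (simp_all add: grid_min_le_scaleR)
      then show ?thesis
        by (rule add_mono[OF pos_orthomorphism_mono[OF \<Phi>\<^sub>1] pos_orthomorphism_mono[OF \<Phi>\<^sub>2]])
    qed
    finally show ?thesis
      by (simp add: d_def linear_scale[OF pos_orthomorphism_linear[OF \<Phi>\<^sub>1]]
          linear_scale[OF pos_orthomorphism_linear[OF \<Phi>\<^sub>2]] scaleR_add_right)
  qed
  have "D = 0"
    using archimedean_vl_eq_0[OF arch _ bound] by (simp add: D_def)
  then show ?thesis by (simp add: D_def)
qed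

lemma pos_orthomorphism_commute_nonneg:
  fixes T S :: "'a \<Rightarrow> 'a"
  assumes T: "pos_orthomorphism T" and S: "pos_orthomorphism S" and x: "0 \<le> x"
  shows "S (T x) = T (S x)"
proof -
  have lT: "linear T" and lS: "linear S"
    using T S by (simp_all add: pos_orthomorphism_linear)
  have ST: "pos_orthomorphism (\<lambda>z. S (T z) + T (S z))"
    by (rule pos_orthomorphism_add[OF pos_orthomorphism_comp[OF T S] pos_orthomorphism_comp[OF S T]])
  define D where "D z = S (T z) - T (S z)" for z
  \<comment> \<open>Split \<open>x\<close> into a part \<open>u\<close> on which \<open>T\<close> and \<open>S\<close> are bounded by \<open>n + 1\<close>, where they commute,
    and a remainder of size at most \<open>(T x + S x) / n\<close>.\<close>
  have bound: "labs (D x) \<le> (1 / real n) *\<^sub>R (S (T (T x + S x)) + T (S (T x + S x)))"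
    if n: "1 \<le> n" for n :: nat
  proof -
    define K where "K = real n + 1"
    have K: "0 < K" by (simp add: K_def)
    define u where "u = inf x (inf (- vl.nprt (T x - K *\<^sub>R x)) (- vl.nprt (S x - K *\<^sub>R x)))"
    have u: "0 \<le> u" using x by (simp add: u_def)
    have "T u \<le> K *\<^sub>R u" and "S u \<le> K *\<^sub>R u"
      using K x u
      by (auto intro!: pos_orthomorphism_le_scaleR_below_nprt[OF T] pos_orthomorphism_le_scaleR_below_nprt[OF S]
          simp: u_def le_infI2)
    then have "D u = 0"
      using pos_orthomorphism_commute_bounded[OF T S K u] by (simp add: D_def)
    define z where "z = x - u"
    have "u \<le> x" unfolding u_def by (rule inf_le1)
    then have z: "0 \<le> z" by (simp add: z_def)
    have "D x = D z"
      using \<open>D u = 0\<close> by (simp add: D_def z_def linear_diff[OF lT] linear_diff[OF lS]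
          linear_diff[OF linear_compose[OF lT lS, unfolded comp_def]]
          linear_diff[OF linear_compose[OF lS lT, unfolded comp_def]])
    have z_le: "z \<le> (1 / real n) *\<^sub>R (T x + S x)"
      unfolding z_def u_def K_def
      using diff_inf_nprt_le[OF x pos_orthomorphism_nonneg[OF T x] pos_orthomorphism_nonneg[OF S x], of "real n"] n
      by simp
    have "labs (D x) \<le> S (T z) + T (S z)"
      unfolding \<open>D x = D z\<close> unfolding D_def using vl.abs_triangle_ineq4[of "S (T z)" "T (S z)"] z T S
      by (simp add: pos_orthomorphism_nonneg)
    also have "\<dots> \<le> S (T ((1 / real n) *\<^sub>R (T x + S x))) + T (S ((1 / real n) *\<^sub>R (T x + S x)))"
      using pos_orthomorphism_mono[OF ST z_le] .
    also have "\<dots> = (1 / real n) *\<^sub>R (S (T (T x + S x)) + T (S (T x + S x)))"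
      by (simp add: linear_scale[OF lT] linear_scale[OF lS] linear_add[OF lT] linear_add[OF lS]
          scaleR_add_right)
    finally show ?thesis .
  qed
  have "labs (D x) = 0"
    using archimedean_vl_eq_0[OF arch _ bound] by simp
  then show ?thesis by (simp add: D_def)
qed

lemma pos_orthomorphism_commute:
  fixes T S :: "'a \<Rightarrow> 'a"
  assumes T: "pos_orthomorphism T" and S: "pos_orthomorphism S"
  shows "S (T x) = T (S x)"
proof -
  have lT: "linear T" and lS: "linear S"
    using T S by (simp_all add: pos_orthomorphism_linear)
  have x: "x = vl.pprt x - vl.pprt (- x)"
    by (simp add: vl.pprt_neg vl.prts[symmetric])
  have "S (T x) = S (T (vl.pprt x)) - S (T (vl.pprt (- x)))"
    by (subst x) (simp add: linear_diff[OF lT] linear_diff[OF lS])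
  also have "\<dots> = T (S (vl.pprt x)) - T (S (vl.pprt (- x)))"
    by (simp add: pos_orthomorphism_commute_nonneg[OF T S])
  also have "\<dots> = T (S x)"
    by (subst (3) x) (simp add: linear_diff[OF lT] linear_diff[OF lS])
  finally show ?thesis .
qed

end

section \<open>\<open>f\<close>-algebras\<close>

context
  assumes F: "f_algebra TYPE('f::{real_algebra,ordered_real_vector,lattice})"
begin

lemma f_algebra_archimedean: "archimedean_vl TYPE('f)"
  using F by (simp add: f_algebra_def)

lemma f_algebra_mult_nonneg: "0 \<le> x \<Longrightarrow> 0 \<le> y \<Longrightarrow> 0 \<le> (x::'f) * y"
  using F by (simp add: f_algebra_def)

lemma f_algebra_disjoint_mult_right: "inf x y = 0 \<Longrightarrow> 0 \<le> z \<Longrightarrow> inf (x * z) y = (0::'f)"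
  using F by (simp add: f_algebra_def)

lemma f_algebra_mult_right_mono: "0 \<le> z \<Longrightarrow> x \<le> y \<Longrightarrow> x * z \<le> y * (z::'f)"
  using f_algebra_mult_nonneg[of "y - x" z] by (simp add: left_diff_distrib)

lemma f_algebra_mult_left_mono: "0 \<le> z \<Longrightarrow> x \<le> y \<Longrightarrow> z * x \<le> z * (y::'f)"
  using f_algebra_mult_nonneg[of z "y - x"] by (simp add: right_diff_distrib)

lemma f_algebra_mult_self_mono:
  assumes "0 \<le> x" "x \<le> y"
  shows "x * x \<le> y * (y::'f)"
  using f_algebra_mult_left_mono[OF assms] f_algebra_mult_right_mono[OF order.trans[OF assms] assms(2)]
  by (rule order.trans)

lemma pos_orthomorphism_mult_right:
  assumes "0 \<le> z"
  shows "pos_orthomorphism (\<lambda>x::'f. x * z)"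
  unfolding pos_orthomorphism_def
  using assms f_algebra_mult_nonneg f_algebra_disjoint_mult_right
  by (auto intro: linearI simp: distrib_right)

lemma f_algebra_mult_right_commute:
  "0 \<le> a \<Longrightarrow> 0 \<le> b \<Longrightarrow> x * a * b = x * b * (a::'f)"
  using pos_orthomorphism_commute[OF f_algebra_archimedean pos_orthomorphism_mult_right
      pos_orthomorphism_mult_right, of a b x]
  by simp

lemma disjoint_mult_self:
  fixes x y :: 'f
  assumes "0 \<le> x" "0 \<le> y" "inf x y = 0"
  shows "inf (x * x) (y * y) = 0"
proof -
  have "inf y (x * x) = 0"
    using f_algebra_disjoint_mult_right[OF assms(3,1)] by (simp add: inf_commute)
  then show ?thesis
    using f_algebra_disjoint_mult_right[OF _ assms(2)] by (simp add: inf_commute)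
qed

lemma mult_pprt_diff_scaleR_le:
  fixes y s z :: 'f
  assumes y: "0 \<le> y" and s: "0 \<le> s" and z: "0 \<le> z" and le: "y \<le> s * z" and M: "0 < M"
  shows "M *\<^sub>R vl.pprt (y - M *\<^sub>R s) \<le> y * z"
proof -
  define d where "d = vl.pprt (y - M *\<^sub>R s)"
  define P where "P = - vl.nprt (y - M *\<^sub>R s)"
  define Q where "Q = inf (M *\<^sub>R s) y"
  have d0: "0 \<le> d" and P0: "0 \<le> P" and Q0: "0 \<le> Q"
    using M s y by (simp_all add: d_def P_def Q_def scaleR_nonneg_nonneg)
  have "M *\<^sub>R s = P + Q"
    by (simp add: P_def Q_def inf_eq_diff_pprt vl.pprt_neg[symmetric])
  have "M *\<^sub>R d \<le> M *\<^sub>R y"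
  proof -
    have "d \<le> vl.pprt y"
      unfolding d_def using M s by (intro vl.pprt_mono) (simp add: scaleR_nonneg_nonneg)
    with y M show ?thesis by (simp add: scaleR_left_mono)
  qed
  also have "M *\<^sub>R y \<le> (M *\<^sub>R s) * z"
    using scaleR_left_mono[OF le, of M] M by simp
  also have "\<dots> = P * z + Q * z"
    by (simp add: \<open>M *\<^sub>R s = P + Q\<close> distrib_right)
  finally have "M *\<^sub>R d \<le> P * z + Q * z" .
  moreover have "inf (M *\<^sub>R d) (P * z) = 0"
  proof -
    have "inf P d = 0"
      using inf_pprt_nprt[of "y - M *\<^sub>R s"] by (simp add: d_def P_def inf_commute)
    then have "inf (P * z) d = 0"
      using z by (rule f_algebra_disjoint_mult_right)
    then show ?thesis
      using disjoint_scaleR[of d "P * z" M 1] d0 P0 z M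
      by (simp add: f_algebra_mult_nonneg inf_commute)
  qed
  ultimately have "M *\<^sub>R d \<le> Q * z"
    using disjoint_le_add_imp_le[of "M *\<^sub>R d" "P * z" "Q * z"] d0 P0 Q0 z M
    by (simp add: f_algebra_mult_nonneg scaleR_nonneg_nonneg)
  also have "Q * z \<le> y * z"
    using z by (intro f_algebra_mult_right_mono) (simp_all add: Q_def)
  finally show ?thesis by (simp add: d_def)
qed

lemma f_algebra_eq_0_if_le_mult_glb_diff:
  fixes y z g :: 'f
  assumes g: "is_glb A g" and z: "0 \<le> z" and y: "0 \<le> y"
    and y_le: "\<And>s. s \<in> A \<Longrightarrow> y \<le> (s - g) * z"
  shows "y = 0"
proof (rule archimedean_vl_eq_0[OF f_algebra_archimedean y])
  fix n :: nat
  assume "1 \<le> n"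
  define M where "M = real n"
  have M: "0 < M" using \<open>1 \<le> n\<close> by (simp add: M_def)
  define c where "c = (1 / (M * M)) *\<^sub>R (M *\<^sub>R y - y * z)"
  have "g + c \<le> s" if s: "s \<in> A" for s
  proof -
    have "M *\<^sub>R vl.pprt (y - M *\<^sub>R (s - g)) \<le> y * z"
      using g s y z M y_le[OF s] by (intro mult_pprt_diff_scaleR_le) (simp_all add: is_glb_def)
    moreover have "M *\<^sub>R (y - M *\<^sub>R (s - g)) \<le> M *\<^sub>R vl.pprt (y - M *\<^sub>R (s - g))"
      using M by (intro scaleR_left_mono) (simp_all add: vl.pprt_def)
    ultimately have "M *\<^sub>R (y - M *\<^sub>R (s - g)) \<le> y * z"
      by (rule order.trans[rotated])
    then have "M *\<^sub>R y - y * z \<le> (M * M) *\<^sub>R (s - g)"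
      by (simp add: algebra_simps)
    then have "c \<le> (1 / (M * M)) *\<^sub>R ((M * M) *\<^sub>R (s - g))"
      unfolding c_def by (rule scaleR_left_mono) simp
    with M show ?thesis by (simp add: le_diff_eq add.commute)
  qed
  then have "g + c \<le> g"
    using g unfolding is_glb_def by blast
  then have "(M * M) *\<^sub>R c \<le> 0"
    using M by (simp add: scaleR_nonneg_nonpos)
  then have "M *\<^sub>R y \<le> y * z"
    using M by (simp add: c_def)
  then have "(1 / M) *\<^sub>R (M *\<^sub>R y) \<le> (1 / M) *\<^sub>R (y * z)"
    using M by (intro scaleR_left_mono) simp_all
  with M show "y \<le> (1 / real n) *\<^sub>R (y * z)" by (simp add: M_def)
qed

lemma is_glb_mult_right:
  fixes z g :: 'f
  assumes g: "is_glb A g" and z: "0 \<le> z"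
  shows "is_glb ((\<lambda>s. s * z) ` A) (g * z)"
  unfolding is_glb_def
proof (intro conjI ballI allI impI)
  show "g * z \<le> t" if "t \<in> (\<lambda>s. s * z) ` A" for t
    using that g z by (auto simp: is_glb_def intro: f_algebra_mult_right_mono)
next
  fix w
  assume w: "\<forall>t\<in>(\<lambda>s. s * z) ` A. w \<le> t"
  have "vl.pprt (w - g * z) = 0"
  proof (rule f_algebra_eq_0_if_le_mult_glb_diff[OF g z])
    show "vl.pprt (w - g * z) \<le> (s - g) * z" if "s \<in> A" for s
    proof -
      have "0 \<le> s - g" using g that by (simp add: is_glb_def)
      then have "0 \<le> (s - g) * z" using z by (rule f_algebra_mult_nonneg)
      moreover have "w - g * z \<le> (s - g) * z"
        using w that by (simp add: left_diff_distrib)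
      ultimately show ?thesis by (simp add: vl.pprt_def)
    qed
  qed simp
  then show "w \<le> g * z"
    by (simp add: vl.le_zero_iff_zero_pprt[symmetric])
qed

end

context
  assumes F: "f_algebra TYPE('f::{real_algebra,ordered_real_vector,lattice})"
    and S: "semiprime TYPE('f)"
begin

lemma semiprime_f_algebra_mult_commute: "(a::'f) * b = b * a"
proof -
  have nonneg: "a * b = b * a" if "0 \<le> a" "0 \<le> b" for a b :: 'f
  proof -
    define c where "c = a * b - b * a"
    have "x * c = 0" for x
      using f_algebra_mult_right_commute[OF F that, of x] by (simp add: c_def right_diff_distrib mult.assoc)
    then have "mpow c (Suc 0) = 0" by simp
    with S have "c = 0" unfolding semiprime_def by blast
    then show ?thesis by (simp add: c_def)
  qed
  define p n q r where "p = vl.pprt a" and "n = vl.pprt (- a)" and "q = vl.pprt b" and "r = vl.pprt (- b)"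
  have a: "a = p - n" and b: "b = q - r"
    by (simp_all add: p_def n_def q_def r_def vl.pprt_neg vl.prts[symmetric])
  have "0 \<le> p" "0 \<le> n" "0 \<le> q" "0 \<le> r"
    by (simp_all add: p_def n_def q_def r_def)
  then show ?thesis
    unfolding a b by (simp add: algebra_simps nonneg)
qed

lemma disjoint_mult_eq_0:
  assumes "0 \<le> x" "0 \<le> y" "inf x y = (0::'f)"
  shows "x * y = 0"
proof -
  have "inf (y * x) x = 0"
    using assms f_algebra_disjoint_mult_right[OF F, of y x x] by (simp add: inf_commute)
  then have "inf x (x * y) = 0"
    by (simp add: semiprime_f_algebra_mult_commute inf_commute)
  then have "inf (x * y) (x * y) = 0"
    using assms f_algebra_disjoint_mult_right[OF F, of x "x * y" y] by simp
  then show ?thesis by simp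
qed

lemma pprt_mult_nprt: "vl.pprt x * vl.nprt (x::'f) = 0"
  using disjoint_mult_eq_0[OF _ _ inf_pprt_nprt[of x]] by simp

lemma mult_self_eq_pprt_nprt: "(x::'f) * x = vl.pprt x * vl.pprt x + vl.nprt x * vl.nprt x"
proof -
  have "x * x = (vl.pprt x + vl.nprt x) * (vl.pprt x + vl.nprt x)"
    by (simp flip: vl.prts)
  then show ?thesis
    by (simp add: algebra_simps pprt_mult_nprt semiprime_f_algebra_mult_commute[of "vl.nprt x" "vl.pprt x"])
qed

lemma labs_mult_labs: "labs x * labs x = (x::'f) * x"
proof -
  have "labs x * labs x = (vl.pprt x - vl.nprt x) * (vl.pprt x - vl.nprt x)"
    by (simp add: vl.abs_prts)
  also have "\<dots> = vl.pprt x * vl.pprt x + vl.nprt x * vl.nprt x"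
    by (simp add: algebra_simps pprt_mult_nprt semiprime_f_algebra_mult_commute[of "vl.nprt x" "vl.pprt x"])
  also have "\<dots> = x * x"
    by (rule mult_self_eq_pprt_nprt[symmetric])
  finally show ?thesis .
qed

lemma mult_self_nonneg: "0 \<le> (x::'f) * x"
proof -
  have "0 \<le> vl.nprt x * vl.nprt x"
    using f_algebra_mult_nonneg[OF F, of "- vl.nprt x" "- vl.nprt x"] by simp
  then have "0 \<le> vl.pprt x * vl.pprt x + vl.nprt x * vl.nprt x"
    using f_algebra_mult_nonneg[OF F, of "vl.pprt x" "vl.pprt x"] by simp
  then show ?thesis
    by (simp only: mult_self_eq_pprt_nprt[of x])
qed

lemma two_mult_le_add_mult_self: "2 *\<^sub>R ((u::'f) * v) \<le> u * u + v * v"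
proof -
  have "0 \<le> (u - v) * (u - v)" by (rule mult_self_nonneg)
  also have "(u - v) * (u - v) = u * u + v * v - 2 *\<^sub>R (u * v)"
    by (simp add: algebra_simps scaleR_2 semiprime_f_algebra_mult_commute[of v u])
  finally show ?thesis by simp
qed

lemma mult_self_add_le: "((a::'f) + b) * (a + b) \<le> 2 *\<^sub>R (a * a) + 2 *\<^sub>R (b * b)"
proof -
  have "(a + b) * (a + b) = a * a + b * b + 2 *\<^sub>R (a * b)"
    by (simp add: algebra_simps scaleR_2 semiprime_f_algebra_mult_commute[of b a])
  also have "\<dots> \<le> 2 *\<^sub>R (a * a) + 2 *\<^sub>R (b * b)"
    using two_mult_le_add_mult_self[of a b] by (simp add: scaleR_2)
  finally show ?thesis .
qed

lemma disjoint_mult_add_mult_self: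
  assumes m: "0 \<le> m" and u: "0 \<le> u" and v: "0 \<le> v" and uv: "inf u v = (0::'f)"
  shows "inf v (2 *\<^sub>R (m * u) + u * u) = 0"
proof (rule disjoint_add[OF v])
  have "inf (u * m) v = 0"
    using uv m by (rule f_algebra_disjoint_mult_right[OF F])
  then show "inf v (2 *\<^sub>R (m * u)) = 0"
    using disjoint_scaleR[of v "m * u" 1 2] v m u
    by (simp add: semiprime_f_algebra_mult_commute[of m] inf_commute f_algebra_mult_nonneg[OF F])
  show "inf v (u * u) = 0"
    using f_algebra_disjoint_mult_right[OF F uv u] by (simp add: inf_commute)
qed (use m u in \<open>simp_all add: scaleR_nonneg_nonneg f_algebra_mult_nonneg[OF F]\<close>)

lemma inf_mult_self:
  assumes x: "0 \<le> x" and y: "0 \<le> (y::'f)"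
  shows "inf x y * inf x y = inf (x * x) (y * y)"
proof -
  define m where "m = inf x y"
  define x' where "x' = x - m"
  define y' where "y' = y - m"
  have m: "0 \<le> m" and "m \<le> x" and "m \<le> y"
    using x y by (simp_all add: m_def)
  then have x': "0 \<le> x'" and y': "0 \<le> y'"
    by (simp_all add: x'_def y'_def)
  have "inf x' y' = 0"
    unfolding x'_def y'_def inf_diff_distrib_right[symmetric] m_def by simp
  define X where "X = 2 *\<^sub>R (m * x') + x' * x'"
  define Y where "Y = 2 *\<^sub>R (m * y') + y' * y'"
  have "inf y' X = 0"
    unfolding X_def using m x' y' \<open>inf x' y' = 0\<close> by (rule disjoint_mult_add_mult_self)
  moreover have "0 \<le> X"
    using m x' by (simp add: X_def scaleR_nonneg_nonneg f_algebra_mult_nonneg[OF F])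
  ultimately have "inf X Y = 0"
    unfolding Y_def using m y' by (intro disjoint_mult_add_mult_self) (simp_all add: inf_commute)
  have "x * x = m * m + X" and "y * y = m * m + Y"
    by (simp_all add: X_def Y_def x'_def y'_def algebra_simps scaleR_2
        semiprime_f_algebra_mult_commute[of x m] semiprime_f_algebra_mult_commute[of y m])
  then have "inf (x * x) (y * y) = m * m + inf X Y"
    by (simp add: vl.add_inf_distrib_left)
  with \<open>inf X Y = 0\<close> show ?thesis by (simp add: m_def)
qed

lemma scaleR_mult_self_diff:
  fixes a b :: 'f
  assumes "t \<noteq> 0"
  shows "t *\<^sub>R (a * a) + inverse t *\<^sub>R (b * b) - 2 *\<^sub>R (a * b)
    = inverse t *\<^sub>R ((t *\<^sub>R a - b) * (t *\<^sub>R a - b))"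
  using assms
  by (simp add: algebra_simps scaleR_2 semiprime_f_algebra_mult_commute[of b a])

lemma le_scaleR_mult_self_grid_min:
  fixes a b e :: 'f
  assumes e: "\<And>t. 0 < t \<Longrightarrow> e \<le> inverse t *\<^sub>R ((t *\<^sub>R a - b) * (t *\<^sub>R a - b))"
    and s: "0 < s" and d: "0 \<le> d"
  shows "e \<le> inverse s *\<^sub>R (grid_min a (b - s *\<^sub>R a) d N * grid_min a (b - s *\<^sub>R a) d N)"
proof (rule grid_min_greatest)
  show "inverse s *\<^sub>R (inf u v * inf u v) = inf (inverse s *\<^sub>R (u * u)) (inverse s *\<^sub>R (v * v))"
    if "0 \<le> u" "0 \<le> v" for u v :: 'f
    using inf_mult_self[OF that] scaleR_inf_distrib[of "inverse s" "u * u" "v * v"] s by simp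
  show "e \<le> inverse s *\<^sub>R (labs ((real k * d) *\<^sub>R a - (b - s *\<^sub>R a))
                             * labs ((real k * d) *\<^sub>R a - (b - s *\<^sub>R a)))" for k
  proof -
    define t where "t = s + real k * d"
    have "s \<le> t" using d by (simp add: t_def)
    then have t: "0 < t" "inverse t \<le> inverse s"
      using less_le_trans[OF s] le_imp_inverse_le[OF _ s] by simp_all
    have "e \<le> inverse t *\<^sub>R ((t *\<^sub>R a - b) * (t *\<^sub>R a - b))"
      by (rule e[OF t(1)])
    also have "\<dots> \<le> inverse s *\<^sub>R ((t *\<^sub>R a - b) * (t *\<^sub>R a - b))"
      using t mult_self_nonneg by (intro scaleR_right_mono)
    also have "t *\<^sub>R a - b = (real k * d) *\<^sub>R a - (b - s *\<^sub>R a)"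
      by (simp add: t_def algebra_simps)
    finally show ?thesis by (simp add: labs_mult_labs)
  qed
qed

lemma le_scaleR_mult_self_grid:
  fixes a b e :: 'f
  assumes a: "0 \<le> a" and b: "0 \<le> b"
    and e: "\<And>t. 0 < t \<Longrightarrow> e \<le> inverse t *\<^sub>R ((t *\<^sub>R a - b) * (t *\<^sub>R a - b))"
    and n: "1 \<le> n"
  shows "e \<le> (8 / real n) *\<^sub>R (a * a)
    + (2 * real n) *\<^sub>R (vl.pprt (b - (1 / real n + real n) *\<^sub>R a) * vl.pprt (b - (1 / real n + real n) *\<^sub>R a))"
proof -
  define N where "N = real n"
  have N: "1 \<le> N" using n by (simp add: N_def)
  define d where "d = 1 / (N * N)"
  have d: "0 \<le> d" by (simp add: d_def)
  define y where "y = b - (1 / N) *\<^sub>R a"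
  define g where "g = grid_min a y d (n * n * n)"
  define \<alpha> where "\<alpha> = (d + 1 / N) *\<^sub>R a"
  define \<beta> where "\<beta> = vl.pprt (b - (1 / N + N) *\<^sub>R a)"
  have "e \<le> N *\<^sub>R (g * g)"
    using le_scaleR_mult_self_grid_min[OF e _ d, of "1 / N" "n * n * n"] N by (simp add: g_def y_def)
  also have "\<dots> \<le> N *\<^sub>R ((\<alpha> + \<beta>) * (\<alpha> + \<beta>))"
  proof -
    have nprt_y: "- vl.nprt y \<le> (1 / N) *\<^sub>R a"
      using vl.pprt_mono[of "(1 / N) *\<^sub>R a - b" "(1 / N) *\<^sub>R a"] vl.pprt_neg[of y] a b N
      by (simp add: y_def scaleR_nonneg_nonneg)
    have "g \<le> d *\<^sub>R a - vl.nprt y + vl.pprt (y - (real (n * n * n) * d) *\<^sub>R a)"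
      unfolding g_def by (rule grid_min_le[OF a d])
    also have "y - (real (n * n * n) * d) *\<^sub>R a = b - (1 / N + N) *\<^sub>R a"
      using N by (simp add: y_def d_def N_def algebra_simps)
    also have "d *\<^sub>R a - vl.nprt y + vl.pprt (b - (1 / N + N) *\<^sub>R a) \<le> \<alpha> + \<beta>"
      using nprt_y by (simp add: \<alpha>_def \<beta>_def scaleR_add_left)
    finally have "g \<le> \<alpha> + \<beta>" .
    then show ?thesis
      using N by (intro scaleR_left_mono f_algebra_mult_self_mono[OF F]) (simp_all add: g_def grid_min_nonneg)
  qed
  also have "\<dots> \<le> (2 * N) *\<^sub>R (\<alpha> * \<alpha>) + (2 * N) *\<^sub>R (\<beta> * \<beta>)"
    using scaleR_left_mono[OF mult_self_add_le[of \<alpha> \<beta>], of N] N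
    by (simp add: scaleR_add_right mult.commute)
  also have "\<dots> \<le> (8 / N) *\<^sub>R (a * a) + (2 * N) *\<^sub>R (\<beta> * \<beta>)"
  proof -
    have "1 / (N * N) \<le> 1 / N" using N by (simp add: frac_le)
    then have "d + 1 / N \<le> 2 / N" by (simp add: d_def)
    then have "2 * N * ((d + 1 / N) * (d + 1 / N)) \<le> 2 * N * ((2 / N) * (2 / N))"
      using N d by (intro mult_left_mono mult_mono) simp_all
    also have "\<dots> = 8 / N" using N by (simp add: field_simps)
    finally show ?thesis
      using mult_self_nonneg[of a] by (simp add: \<alpha>_def scaleR_right_mono)
  qed
  finally show ?thesis by (simp add: N_def \<beta>_def)
qed

lemma eq_0_if_le_inverse_scaleR_mult_self:
  fixes a b e :: 'f
  assumes a: "0 \<le> a" and b: "0 \<le> b" and e0: "0 \<le> e"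
    and e: "\<And>t. 0 < t \<Longrightarrow> e \<le> inverse t *\<^sub>R ((t *\<^sub>R a - b) * (t *\<^sub>R a - b))"
  shows "e = 0"
proof (rule archimedean_vl_eq_0[OF f_algebra_archimedean[OF F] e0])
  fix n :: nat
  assume n: "1 \<le> n"
  define N where "N = real n"
  have N: "1 \<le> N" using n by (simp add: N_def)
  define \<theta> where "\<theta> = 1 / N + N"
  have \<theta>: "0 < \<theta>" "N \<le> \<theta>" using N by (simp_all add: \<theta>_def add_pos_pos)
  define r where "r = \<theta> *\<^sub>R a - b"
  define \<beta> where "\<beta> = - vl.nprt r"
  have \<beta>_eq: "\<beta> = vl.pprt (b - \<theta> *\<^sub>R a)"
    using vl.pprt_neg[of r] by (simp add: \<beta>_def r_def)
  have \<beta>0: "0 \<le> \<beta>" by (simp add: \<beta>_def)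
  \<comment> \<open>The grid bound controls \<open>e\<close> except on the band of \<open>\<beta>\<close>, where \<open>b > \<theta> a\<close>; there the single
    value \<open>t = \<theta>\<close> does the job, and the two error terms live in disjoint bands.\<close>
  have grid: "e \<le> (2 * N) *\<^sub>R (\<beta> * \<beta>) + (8 / N) *\<^sub>R (a * a)"
    using le_scaleR_mult_self_grid[OF a b e n] by (simp add: \<beta>_eq \<theta>_def N_def add.commute)
  have "e \<le> inverse \<theta> *\<^sub>R (r * r)"
    using e[OF \<theta>(1)] by (simp add: r_def)
  then have at_\<theta>: "e \<le> inverse \<theta> *\<^sub>R (\<beta> * \<beta>) + inverse \<theta> *\<^sub>R (vl.pprt r * vl.pprt r)"
    by (simp add: mult_self_eq_pprt_nprt[of r] \<beta>_def scaleR_add_right add.commute)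
  have disj: "inf ((2 * N) *\<^sub>R (\<beta> * \<beta>)) (inverse \<theta> *\<^sub>R (vl.pprt r * vl.pprt r)) = 0"
  proof (rule disjoint_scaleR)
    have "inf \<beta> (vl.pprt r) = 0"
      using inf_pprt_nprt[of r] by (simp add: \<beta>_def inf_commute)
    then show "inf (\<beta> * \<beta>) (vl.pprt r * vl.pprt r) = 0"
      using \<beta>0 by (intro disjoint_mult_self[OF F]) simp_all
  qed (use N \<theta> \<beta>0 in \<open>simp_all add: f_algebra_mult_nonneg[OF F]\<close>)
  have "0 \<le> inverse \<theta> *\<^sub>R (\<beta> * \<beta>)" and "0 \<le> (8 / N) *\<^sub>R (a * a)"
    using \<theta> N by (simp_all add: scaleR_nonneg_nonneg mult_self_nonneg)
  then have "e \<le> inverse \<theta> *\<^sub>R (\<beta> * \<beta>) + (8 / N) *\<^sub>R (a * a)"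
    by (rule le_add_if_le_inf_disjoint[OF _ _ disj grid at_\<theta>])
  also have "\<dots> \<le> (1 / N) *\<^sub>R (b * b) + (8 / N) *\<^sub>R (a * a)"
  proof (rule add_right_mono)
    have "\<beta> \<le> b"
      using \<theta> a b vl.pprt_mono[of "b - \<theta> *\<^sub>R a" b] by (simp add: \<beta>_eq scaleR_nonneg_nonneg)
    then have "\<beta> * \<beta> \<le> b * b" by (rule f_algebra_mult_self_mono[OF F \<beta>0])
    then show "inverse \<theta> *\<^sub>R (\<beta> * \<beta>) \<le> (1 / N) *\<^sub>R (b * b)"
      using \<theta> N mult_self_nonneg[of b] mult_self_nonneg[of \<beta>]
      by (intro scaleR_mono) (simp_all add: frac_le inverse_eq_divide)
  qed
  finally show "e \<le> (1 / real n) *\<^sub>R (b * b + 8 *\<^sub>R (a * a))"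
    by (simp add: N_def scaleR_add_right)
qed

lemma is_glb_gm_set_mult_self:
  fixes a b :: 'f
  assumes a: "0 \<le> a" and b: "0 \<le> b"
  shows "is_glb (gm_set (a * a) (b * b)) (2 *\<^sub>R (a * b))"
  unfolding is_glb_def
proof (intro conjI ballI allI impI)
  fix s assume "s \<in> gm_set (a * a) (b * b)"
  then obtain t where t: "0 < t" "s = t *\<^sub>R (a * a) + inverse t *\<^sub>R (b * b)"
    unfolding gm_set_def by blast
  have "0 \<le> inverse t *\<^sub>R ((t *\<^sub>R a - b) * (t *\<^sub>R a - b))"
    using t mult_self_nonneg by (simp add: scaleR_nonneg_nonneg)
  then have "0 \<le> t *\<^sub>R (a * a) + inverse t *\<^sub>R (b * b) - 2 *\<^sub>R (a * b)"
    using scaleR_mult_self_diff[of t a b] t by simp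
  with t show "2 *\<^sub>R (a * b) \<le> s"
    by (simp only: diff_ge_0_iff_ge)
next
  fix w assume w: "\<forall>s\<in>gm_set (a * a) (b * b). w \<le> s"
  define e where "e = vl.pprt (w - 2 *\<^sub>R (a * b))"
  have "e = 0"
  proof (rule eq_0_if_le_inverse_scaleR_mult_self[OF a b])
    show "0 \<le> e" by (simp add: e_def)
    show "e \<le> inverse t *\<^sub>R ((t *\<^sub>R a - b) * (t *\<^sub>R a - b))" if t: "0 < t" for t
    proof -
      have "w \<le> t *\<^sub>R (a * a) + inverse t *\<^sub>R (b * b)"
        using w t unfolding gm_set_def by blast
      then have "w - 2 *\<^sub>R (a * b) \<le> t *\<^sub>R (a * a) + inverse t *\<^sub>R (b * b) - 2 *\<^sub>R (a * b)"
        by (rule diff_right_mono)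
      also have "\<dots> = inverse t *\<^sub>R ((t *\<^sub>R a - b) * (t *\<^sub>R a - b))"
        using t by (intro scaleR_mult_self_diff) simp
      moreover have "0 \<le> inverse t *\<^sub>R ((t *\<^sub>R a - b) * (t *\<^sub>R a - b))"
        using t mult_self_nonneg by (simp add: scaleR_nonneg_nonneg)
      ultimately show ?thesis by (simp add: e_def vl.pprt_def)
    qed
  qed
  then show "w \<le> 2 *\<^sub>R (a * b)"
    by (simp add: e_def vl.le_zero_iff_zero_pprt[symmetric])
qed

lemma mult_scaleR_add_scaleR:
  fixes a b :: 'f
  shows "(p *\<^sub>R a + q *\<^sub>R b) * (r *\<^sub>R a + t *\<^sub>R b)
       = (p * r) *\<^sub>R (a * a) + (p * t + q * r) *\<^sub>R (a * b) + (q * t) *\<^sub>R (b * b)"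
  by (simp add: algebra_simps semiprime_f_algebra_mult_commute[of b a])

lemma glb_gm_set_mult_self_le:
  fixes a b g :: 'f
  assumes g: "is_glb (gm_set a b) g" and a: "0 \<le> a" and b: "0 \<le> b"
  shows "g * g \<le> 4 *\<^sub>R (a * b)"
proof -
  have g0: "0 \<le> g" by (rule is_glb_nonneg[OF g gm_set_nonneg[OF a b]])
  have "g * g - 2 *\<^sub>R (a * b) \<le> s" if s: "s \<in> gm_set (a * a) (b * b)" for s
  proof -
    obtain \<phi> where \<phi>: "0 < \<phi>" "s = \<phi> *\<^sub>R (a * a) + inverse \<phi> *\<^sub>R (b * b)"
      using s unfolding gm_set_def by blast
    define \<theta> where "\<theta> = sqrt \<phi>"
    have \<theta>: "0 < \<theta>" "\<theta> * \<theta> = \<phi>" using \<phi> by (simp_all add: \<theta>_def)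
    have "\<theta> *\<^sub>R a + inverse \<theta> *\<^sub>R b \<in> gm_set a b"
      using \<theta> unfolding gm_set_def by blast
    then have "g \<le> \<theta> *\<^sub>R a + inverse \<theta> *\<^sub>R b"
      using g unfolding is_glb_def by blast
    then have "g * g \<le> (\<theta> *\<^sub>R a + inverse \<theta> *\<^sub>R b) * (\<theta> *\<^sub>R a + inverse \<theta> *\<^sub>R b)"
      by (rule f_algebra_mult_self_mono[OF F g0])
    also have "\<dots> = s + 2 *\<^sub>R (a * b)"
      using \<theta> \<phi> by (simp add: mult_scaleR_add_scaleR field_simps)
    finally show ?thesis by (simp add: diff_le_eq)
  qed
  then have "g * g - 2 *\<^sub>R (a * b) \<le> 2 *\<^sub>R (a * b)"
    using is_glb_gm_set_mult_self[OF a b] unfolding is_glb_def by blast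
  then show ?thesis by (simp add: diff_le_eq scaleR_left_distrib[symmetric])
qed

lemma glb_gm_set_mult_self_ge:
  fixes a b g :: 'f
  assumes g: "is_glb (gm_set a b) g" and a: "0 \<le> a" and b: "0 \<le> b"
  shows "4 *\<^sub>R (a * b) \<le> g * g"
proof -
  have g0: "0 \<le> g" by (rule is_glb_nonneg[OF g gm_set_nonneg[OF a b]])
  have "4 *\<^sub>R (a * b) \<le> t * s" if s: "s \<in> gm_set a b" and t: "t \<in> gm_set a b" for s t
  proof -
    obtain \<theta> where \<theta>: "0 < \<theta>" "s = \<theta> *\<^sub>R a + inverse \<theta> *\<^sub>R b"
      using s unfolding gm_set_def by blast
    obtain \<phi> where \<phi>: "0 < \<phi>" "t = \<phi> *\<^sub>R a + inverse \<phi> *\<^sub>R b"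
      using t unfolding gm_set_def by blast
    have "(\<phi> * \<theta>) *\<^sub>R (a * a) + inverse (\<phi> * \<theta>) *\<^sub>R (b * b) \<in> gm_set (a * a) (b * b)"
      using \<theta> \<phi> unfolding gm_set_def by (intro CollectI exI[of _ "\<phi> * \<theta>"]) simp
    then have h1: "2 *\<^sub>R (a * b) \<le> (\<phi> * \<theta>) *\<^sub>R (a * a) + inverse (\<phi> * \<theta>) *\<^sub>R (b * b)"
      using is_glb_gm_set_mult_self[OF a b] unfolding is_glb_def by blast
    have h2: "2 *\<^sub>R (a * b) \<le> (\<phi> * inverse \<theta> + inverse \<phi> * \<theta>) *\<^sub>R (a * b)"
    proof (rule scaleR_right_mono)
      have "0 \<le> (\<phi> - \<theta>) * (\<phi> - \<theta>)" by simp
      with \<theta> \<phi> show "2 \<le> \<phi> * inverse \<theta> + inverse \<phi> * \<theta>"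
        by (simp add: field_simps algebra_simps)
    qed (use a b in \<open>simp add: f_algebra_mult_nonneg[OF F]\<close>)
    have "t * s = ((\<phi> * \<theta>) *\<^sub>R (a * a) + inverse (\<phi> * \<theta>) *\<^sub>R (b * b))
                  + (\<phi> * inverse \<theta> + inverse \<phi> * \<theta>) *\<^sub>R (a * b)"
      unfolding \<theta>(2) \<phi>(2) mult_scaleR_add_scaleR by (simp add: add_ac)
    then have "2 *\<^sub>R (a * b) + 2 *\<^sub>R (a * b) \<le> t * s"
      using add_mono[OF h1 h2] by simp
    then show ?thesis by (simp add: scaleR_left_distrib[symmetric])
  qed
  \<comment> \<open>Multiplication by a positive element preserves infima, so \<open>g s = inf\<^sub>t t s\<close> and \<open>g g = inf\<^sub>s s g\<close>.\<close>
  then have "4 *\<^sub>R (a * b) \<le> g * s" if s: "s \<in> gm_set a b" for s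
    using is_glb_mult_right[OF F g gm_set_nonneg[OF a b s]] s unfolding is_glb_def by blast
  then have "4 *\<^sub>R (a * b) \<le> s * g" if s: "s \<in> gm_set a b" for s
    using s by (simp add: semiprime_f_algebra_mult_commute[of s g])
  then show ?thesis
    using is_glb_mult_right[OF F g g0] unfolding is_glb_def by blast
qed

lemma gmean_mult_self:
  fixes a b :: 'f
  assumes G: "geometric_mean_closed TYPE('f)" and a: "0 \<le> a" and b: "0 \<le> b"
  shows "(a \<boxtimes> b) * (a \<boxtimes> b) = a * b"
proof -
  have g: "is_glb (gm_set a b) (2 *\<^sub>R (a \<boxtimes> b))" by (rule is_glb_gmean[OF G a b])
  have "4 *\<^sub>R ((a \<boxtimes> b) * (a \<boxtimes> b)) = 4 *\<^sub>R (a * b)"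
    using glb_gm_set_mult_self_le[OF g a b] glb_gm_set_mult_self_ge[OF g a b] by simp
  then show ?thesis by simp
qed

end

section \<open>The triangle inequality for \<open>Tnorm\<close>\<close>

lemma vector_semi_inner_add_self:
  assumes "vector_semi_inner T"
  shows "T (x + y) (x + y) = T x x + 2 *\<^sub>R T x y + T y y"
proof -
  have B: "bilinear T" and sym: "T y x = T x y"
    using assms by (simp_all add: vector_semi_inner_def)
  show ?thesis
    by (simp add: bilinear_ladd[OF B] bilinear_radd[OF B] sym scaleR_2 add_ac)
qed

lemma vector_semi_inner_scaleR_diff_self:
  assumes "vector_semi_inner T"
  shows "T (l *\<^sub>R x - y) (l *\<^sub>R x - y) = (l * l) *\<^sub>R T x x - (2 * l) *\<^sub>R T x y + T y y"
proof -
  have B: "bilinear T" and sym: "T y x = T x y"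
    using assms by (simp_all add: vector_semi_inner_def)
  show ?thesis
    by (simp add: bilinear_lsub[OF B] bilinear_rsub[OF B] bilinear_lmul[OF B] bilinear_rmul[OF B]
        sym algebra_simps scaleR_2 flip: scaleR_add_left)
qed

lemma Tnorm_nonneg:
  assumes "geometric_mean_closed TYPE('f::{real_algebra,ordered_real_vector,lattice})"
    and "vector_semi_inner (T :: 'v::real_vector \<Rightarrow> 'v \<Rightarrow> 'f)" and "0 \<le> u"
  shows "0 \<le> Tnorm T u z"
  using assms unfolding Tnorm_def vector_semi_inner_def by (simp add: gmean_nonneg)

lemma Tnorm_mult_self:
  assumes "f_algebra TYPE('f::{real_algebra,ordered_real_vector,lattice})" "semiprime TYPE('f)"
    and "geometric_mean_closed TYPE('f)"
    and "vector_semi_inner (T :: 'v::real_vector \<Rightarrow> 'v \<Rightarrow> 'f)" and "0 \<le> u"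
  shows "Tnorm T u z * Tnorm T u z = T z z * u"
  using assms unfolding Tnorm_def vector_semi_inner_def by (simp add: gmean_mult_self)

lemma is_glb_Tnorm_quadratic:
  assumes F: "f_algebra TYPE('f::{real_algebra,ordered_real_vector,lattice})" and S: "semiprime TYPE('f)"
    and G: "geometric_mean_closed TYPE('f)"
    and T: "vector_semi_inner (T :: 'v::real_vector \<Rightarrow> 'v \<Rightarrow> 'f)" and u: "0 \<le> u"
  shows "is_glb {inverse \<bar>l\<bar> *\<^sub>R (Tnorm T u (l *\<^sub>R x - y) * Tnorm T u (l *\<^sub>R x - y)) | l::real. l \<noteq> 0}
           (2 *\<^sub>R (Tnorm T u x * Tnorm T u y) - 2 *\<^sub>R labs (T x y * u))"
proof -
  note norm_sq = Tnorm_mult_self[OF assms]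
  have "is_glb (gm_set (Tnorm T u x * Tnorm T u x) (Tnorm T u y * Tnorm T u y))
      (2 *\<^sub>R (Tnorm T u x * Tnorm T u y))"
    by (intro is_glb_gm_set_mult_self[OF F S] Tnorm_nonneg[OF G T u])
  from is_glb_quadratic[OF this[unfolded norm_sq], of "T x y * u"]
  show ?thesis
    by (simp add: norm_sq vector_semi_inner_scaleR_diff_self[OF T] algebra_simps)
qed

theorem theorem3p5:
  fixes T :: "'v::real_vector \<Rightarrow> 'v \<Rightarrow> 'f::{real_algebra, ordered_real_vector, lattice}"
    and u :: 'f and x y :: 'v
  assumes "f_algebra TYPE('f)" and "semiprime TYPE('f)"
    and "geometric_mean_closed TYPE('f)"
    and "vector_semi_inner T" and "0 \<le> u"
  shows "\<exists>m. is_glb {inverse \<bar>l\<bar> *\<^sub>R (Tnorm T u (l *\<^sub>R x - y) * Tnorm T u (l *\<^sub>R x - y)) | l::real. l \<noteq> 0} m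
      \<and> Tnorm T u (x + y) * Tnorm T u (x + y)
          \<le> (Tnorm T u x + Tnorm T u y) * (Tnorm T u x + Tnorm T u y) - m
      \<and> (Tnorm T u x + Tnorm T u y) * (Tnorm T u x + Tnorm T u y) - m
          \<le> (Tnorm T u x + Tnorm T u y) * (Tnorm T u x + Tnorm T u y)
      \<and> (Tnorm T u (x + y) * Tnorm T u (x + y)
          = (Tnorm T u x + Tnorm T u y) * (Tnorm T u x + Tnorm T u y) - m
         \<longleftrightarrow> 0 \<le> T x y * u)"
proof -
  note norm_sq = Tnorm_mult_self[OF assms]
  define P Q C where "P = Tnorm T u x" and "Q = Tnorm T u y" and "C = T x y * u"
  define m where "m = 2 *\<^sub>R (P * Q) - 2 *\<^sub>R labs C"
  have glb: "is_glb {inverse \<bar>l\<bar> *\<^sub>R (Tnorm T u (l *\<^sub>R x - y) * Tnorm T u (l *\<^sub>R x - y)) | l::real. l \<noteq> 0} m"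
    unfolding m_def P_def Q_def C_def by (rule is_glb_Tnorm_quadratic[OF assms])
  then have "0 \<le> m"
    by (rule is_glb_nonneg)
      (auto intro!: scaleR_nonneg_nonneg f_algebra_mult_nonneg[OF assms(1)] Tnorm_nonneg[OF assms(3-5)])
  have sum: "(P + Q) * (P + Q) - m = T x x * u + T y y * u + 2 *\<^sub>R labs C"
    by (simp add: m_def algebra_simps scaleR_2 P_def Q_def norm_sq
        semiprime_f_algebra_mult_commute[OF assms(1,2), of "Tnorm T u y" "Tnorm T u x"])
  have xy: "Tnorm T u (x + y) * Tnorm T u (x + y) = T x x * u + T y y * u + 2 *\<^sub>R C"
    by (simp add: norm_sq vector_semi_inner_add_self[OF assms(4)] C_def algebra_simps)
  have "Tnorm T u (x + y) * Tnorm T u (x + y) \<le> (P + Q) * (P + Q) - m"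
    unfolding sum xy by (simp add: scaleR_left_mono vl.abs_ge_self)
  moreover have "(P + Q) * (P + Q) - m \<le> (P + Q) * (P + Q)"
    using \<open>0 \<le> m\<close> by simp
  moreover have "Tnorm T u (x + y) * Tnorm T u (x + y) = (P + Q) * (P + Q) - m \<longleftrightarrow> 0 \<le> C"
    unfolding sum xy by simp (metis vl.abs_ge_zero vl.abs_of_nonneg)
  ultimately show ?thesis
    using glb unfolding P_def Q_def C_def by blast
qed

end
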